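(* Consider shadow estimation with random sampling of $g$ from the Clifford group $\mathrm{Cl}_n$ according to an arbitrary probability distribution $p$ such that $S$ is invertible, with noise channels $\Lambda(g)$. Then for an observable $O$ and a state $\rho$ the second moment of the estimator is $$\mathbb{E}(\hat o^2)=\frac1{\sqrt d}\sum_{\substack{a,a'\in\mathbb{F}_2^{2n}:\\ [a,a']=0}}\frac{s_{a,a'}}{s_as_{a'}}(O|\hat\sigma_a)(O|\hat\sigma_{a'})\,(\hat\sigma_{a+a'}|\bar\Lambda_{a,a'}|\rho).$$
   Context: $d=2^n$; $(A|B)=\mathrm{Tr}(A^\dagger B)$, $(A|\mathcal X|B)=\mathrm{Tr}(A^\dagger\mathcal X(B))$; $|A)(B|$ is $C\mapsto(B|C)A$; $\omega(g)(A)=gAg^\dagger$, $\omega(g)^\dagger(A)=g^\dagger Ag$; $E_x=|x\rangle\langle x|$, $M=\sum_x|E_x)(E_x|$, $S=\sum_gp(g)\omega(g)^\dagger M\omega(g)$. Protocol: $g\sim p$, apply $\omega(g)\Lambda(g)$ to $\rho$, measure computational basis obtaining $x$ with probability $\langle x|\omega(g)\Lambda(g)(\rho)|x\rangle$; estimator $\hat o(g,x)=(O|S^{-1}\omega(g)^\dagger|E_x)$. Paulis $\sigma_a$, $a\in\mathbb{F}_2^{2n}$ (per qubit $\sigma_{00}=\mathbb 1,\sigma_{01}=X,\sigma_{11}=Y,\sigma_{10}=Z$), $\hat\sigma_a=\sigma_a/\sqrt d$; $[a,a']=0$ iff $\sigma_a,\sigma_{a'}$ commute, and then $\sigma_a\sigma_{a'}=(-1)^{\beta(a,a')}\sigma_{a+a'}$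 (addition mod 2). $Z_z=\bigotimes_iZ^{z_i}$; $\Xi_z(g)$ is the Pauli $\sigma_b$ with $g^\dagger Z_zg=\pm\sigma_b$. $s_a=\sum_z\sum_{g:\Xi_z(g)=\sigma_a}p(g)$. For commuting $a,a'$: $r_{a,a'}=\sum_{z,z'\in\mathbb{F}_2^n}\sum_{g:\Xi_z(g)=\sigma_a,\Xi_{z'}(g)=\sigma_{a'}}p(g)$, $s_{a,a'}=(-1)^{\beta(a,a')}r_{a,a'}$, $\bar\Lambda_{a,a'}=r_{a,a'}^{-1}\sum_{z,z'}\sum_{g:\Xi_z(g)=\sigma_a,\Xi_{z'}(g)=\sigma_{a'}}p(g)\Lambda(g)$ (terms with $r_{a,a'}=0$ vanish). *)

theory Defs
  imports Complex_Main "Jordan_Normal_Form.Schur_Decomposition"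
begin

definition mtrace :: "complex mat \<Rightarrow> complex" where
  "mtrace A = (\<Sum>i<dim_row A. A $$ (i,i))"

definition hs :: "complex mat \<Rightarrow> complex mat \<Rightarrow> complex" where
  "hs A B = mtrace (mat_adjoint A * B)"

definition is_unitary :: "nat \<Rightarrow> complex mat \<Rightarrow> bool" where
  "is_unitary d U \<longleftrightarrow> U \<in> carrier_mat d d \<and> U * mat_adjoint U = 1\<^sub>m d \<and> mat_adjoint U * U = 1\<^sub>m d"

definition is_psd :: "nat \<Rightarrow> complex mat \<Rightarrow> bool" where
  "is_psd D A \<longleftrightarrow> A \<in> carrier_mat D D \<and>
     (\<forall>v \<in> carrier_vec D. \<exists>t::real. t \<ge> 0 \<and> (A *\<^sub>v v) \<bullet>c v = complex_of_real t)"

definition is_state :: "nat \<Rightarrow> complex mat \<Rightarrow> bool" where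
  "is_state d \<rho> \<longleftrightarrow> is_psd d \<rho> \<and> mtrace \<rho> = 1"

definition is_observable :: "nat \<Rightarrow> complex mat \<Rightarrow> bool" where
  "is_observable d Obs \<longleftrightarrow> Obs \<in> carrier_mat d d \<and> mat_adjoint Obs = Obs"

definition unitm :: "nat \<Rightarrow> nat \<Rightarrow> nat \<Rightarrow> complex mat" where
  "unitm d i j = mat d d (\<lambda>(r,c). if r = i \<and> c = j then 1 else 0)"

definition Eproj :: "nat \<Rightarrow> nat \<Rightarrow> complex mat" where
  "Eproj d x = unitm d x x"

definition is_linear_superop :: "nat \<Rightarrow> (complex mat \<Rightarrow> complex mat) \<Rightarrow> bool" where
  "is_linear_superop d \<Phi> \<longleftrightarrow>
     (\<forall>A \<in> carrier_mat d d. \<Phi> A \<in> carrier_mat d d) \<and>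
     (\<forall>A \<in> carrier_mat d d. \<forall>B \<in> carrier_mat d d. \<Phi> (A + B) = \<Phi> A + \<Phi> B) \<and>
     (\<forall>A \<in> carrier_mat d d. \<forall>c. \<Phi> (c \<cdot>\<^sub>m A) = c \<cdot>\<^sub>m \<Phi> A)"

text \<open>Choi matrix  sum_{i,j} |i><j| (x) Phi(|i><j|), index (i,k) -> i*d+k.\<close>
definition choi :: "nat \<Rightarrow> (complex mat \<Rightarrow> complex mat) \<Rightarrow> complex mat" where
  "choi d \<Phi> = mat (d*d) (d*d) (\<lambda>(r,c). \<Phi> (unitm d (r div d) (c div d)) $$ (r mod d, c mod d))"

definition is_channel :: "nat \<Rightarrow> (complex mat \<Rightarrow> complex mat) \<Rightarrow> bool" where
  "is_channel d \<Phi> \<longleftrightarrow> is_linear_superop d \<Phi> \<and>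
     (\<forall>A \<in> carrier_mat d d. mtrace (\<Phi> A) = mtrace A) \<and>
     is_psd (d*d) (choi d \<Phi>)"

text \<open>Elements of F_2^n are subsets of {..<n} (addition = symmetric difference).
  An element a of F_2^{2n} is a pair (az, ax); on qubit i the two bits are
  (i \<in> az, i \<in> ax), with 00 = 1, 01 = X, 11 = Y, 10 = Z.\<close>

definition bvecs :: "nat \<Rightarrow> nat set set" where
  "bvecs n = Pow {..<n}"

definition pidx :: "nat \<Rightarrow> (nat set \<times> nat set) set" where
  "pidx n = bvecs n \<times> bvecs n"

definition symd :: "nat set \<Rightarrow> nat set \<Rightarrow> nat set" where
  "symd A B = (A - B) \<union> (B - A)"

definition padd :: "nat set \<times> nat set \<Rightarrow> nat set \<times> nat set \<Rightarrow> nat set \<times> nat set" where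
  "padd a b = (symd (fst a) (fst b), symd (snd a) (snd b))"

definition sigma1 :: "bool \<Rightarrow> bool \<Rightarrow> bool \<Rightarrow> bool \<Rightarrow> complex" where
  "sigma1 zb xb r c =
     (if \<not> zb \<and> \<not> xb then (if r = c then 1 else 0)
      else if \<not> zb \<and> xb then (if r = c then 0 else 1)
      else if zb \<and> \<not> xb then (if r = c then (if r then -1 else 1) else 0)
      else (if r = c then 0 else (if r then \<i> else - \<i>)))"

definition pauli :: "nat \<Rightarrow> nat set \<times> nat set \<Rightarrow> complex mat" where
  "pauli n a = mat (2^n) (2^n)
     (\<lambda>(r,c). \<Prod>i<n. sigma1 (i \<in> fst a) (i \<in> snd a) (bit r i) (bit c i))"

definition npauli :: "nat \<Rightarrow> nat set \<times> nat set \<Rightarrow> complex mat" where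
  "npauli n a = (1 / complex_of_real (sqrt (real (2^n)))) \<cdot>\<^sub>m pauli n a"

definition pauli_group :: "nat \<Rightarrow> complex mat set" where
  "pauli_group n = {(\<i> ^ k) \<cdot>\<^sub>m pauli n a | k a. a \<in> pidx n}"

definition pcommute :: "nat \<Rightarrow> nat set \<times> nat set \<Rightarrow> nat set \<times> nat set \<Rightarrow> bool" where
  "pcommute n a b \<longleftrightarrow> pauli n a * pauli n b = pauli n b * pauli n a"

text \<open>beta(a,a'): sigma_a sigma_a' = (-1)^beta sigma_{a+a'} for commuting a, a'.\<close>
definition pbeta :: "nat \<Rightarrow> nat set \<times> nat set \<Rightarrow> nat set \<times> nat set \<Rightarrow> nat" where
  "pbeta n a b = (THE k. k < 2 \<and> pauli n a * pauli n b = ((-1) ^ k) \<cdot>\<^sub>m pauli n (padd a b))"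

definition Zop :: "nat \<Rightarrow> nat set \<Rightarrow> complex mat" where
  "Zop n z = mat (2^n) (2^n)
     (\<lambda>(r,c). if r = c then (\<Prod>i<n. if i \<in> z \<and> bit r i then -1 else 1) else 0)"

definition is_clifford :: "nat \<Rightarrow> complex mat \<Rightarrow> bool" where
  "is_clifford n g \<longleftrightarrow> is_unitary (2^n) g \<and>
     (\<forall>a \<in> pidx n. g * pauli n a * mat_adjoint g \<in> pauli_group n)"

definition Xi :: "nat \<Rightarrow> complex mat \<Rightarrow> nat set \<Rightarrow> nat set \<times> nat set" where
  "Xi n g z = (THE b. b \<in> pidx n \<and>
      (mat_adjoint g * Zop n z * g = pauli n b \<or> mat_adjoint g * Zop n z * g = - pauli n b))"

definition Mch :: "nat \<Rightarrow> complex mat \<Rightarrow> complex mat" where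
  "Mch n A = mat (2^n) (2^n) (\<lambda>(i,j). \<Sum>x<2^n. hs (Eproj (2^n) x) A * Eproj (2^n) x $$ (i,j))"

definition Sop :: "nat \<Rightarrow> complex mat set \<Rightarrow> (complex mat \<Rightarrow> real) \<Rightarrow> complex mat \<Rightarrow> complex mat" where
  "Sop n G p A = mat (2^n) (2^n) (\<lambda>(i,j).
     \<Sum>g\<in>G. complex_of_real (p g) * (mat_adjoint g * Mch n (g * A * mat_adjoint g) * g) $$ (i,j))"

definition Sinv :: "nat \<Rightarrow> complex mat set \<Rightarrow> (complex mat \<Rightarrow> real) \<Rightarrow> complex mat \<Rightarrow> complex mat" where
  "Sinv n G p = the_inv_into (carrier_mat (2^n) (2^n)) (Sop n G p)"

definition ohat :: "nat \<Rightarrow> complex mat set \<Rightarrow> (complex mat \<Rightarrow> real) \<Rightarrow> complex mat \<Rightarrow> complex mat \<Rightarrow> nat \<Rightarrow> complex" where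
  "ohat n G p Obs g x = hs Obs (Sinv n G p (mat_adjoint g * Eproj (2^n) x * g))"

definition outprob :: "(complex mat \<Rightarrow> complex mat \<Rightarrow> complex mat) \<Rightarrow> complex mat \<Rightarrow> complex mat \<Rightarrow> nat \<Rightarrow> complex" where
  "outprob \<Lambda> \<rho> g x = (g * \<Lambda> g \<rho> * mat_adjoint g) $$ (x, x)"

definition second_moment :: "nat \<Rightarrow> complex mat set \<Rightarrow> (complex mat \<Rightarrow> real) \<Rightarrow>
    (complex mat \<Rightarrow> complex mat \<Rightarrow> complex mat) \<Rightarrow> complex mat \<Rightarrow> complex mat \<Rightarrow> complex" where
  "second_moment n G p \<Lambda> Obs \<rho> =
     (\<Sum>g\<in>G. complex_of_real (p g) * (\<Sum>x<2^n. outprob \<Lambda> \<rho> g x * (ohat n G p Obs g x)\<^sup>2))"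

definition s1 :: "nat \<Rightarrow> complex mat set \<Rightarrow> (complex mat \<Rightarrow> real) \<Rightarrow> nat set \<times> nat set \<Rightarrow> real" where
  "s1 n G p a = (\<Sum>z\<in>bvecs n. \<Sum>g\<in>{g\<in>G. Xi n g z = a}. p g)"

definition r2 :: "nat \<Rightarrow> complex mat set \<Rightarrow> (complex mat \<Rightarrow> real) \<Rightarrow> nat set \<times> nat set \<Rightarrow> nat set \<times> nat set \<Rightarrow> real" where
  "r2 n G p a b = (\<Sum>z\<in>bvecs n. \<Sum>z'\<in>bvecs n. \<Sum>g\<in>{g\<in>G. Xi n g z = a \<and> Xi n g z' = b}. p g)"

definition s2 :: "nat \<Rightarrow> complex mat set \<Rightarrow> (complex mat \<Rightarrow> real) \<Rightarrow> nat set \<times> nat set \<Rightarrow> nat set \<times> nat set \<Rightarrow> real" where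
  "s2 n G p a b = (-1) ^ pbeta n a b * r2 n G p a b"

text \<open>Lambda-bar_{a,a'} applied to a matrix (terms with r = 0 vanish, as 1/0 = 0).\<close>
definition Lbar :: "nat \<Rightarrow> complex mat set \<Rightarrow> (complex mat \<Rightarrow> real) \<Rightarrow> (complex mat \<Rightarrow> complex mat \<Rightarrow> complex mat)
     \<Rightarrow> nat set \<times> nat set \<Rightarrow> nat set \<times> nat set \<Rightarrow> complex mat \<Rightarrow> complex mat" where
  "Lbar n G p \<Lambda> a b A = mat (2^n) (2^n) (\<lambda>(i,j).
     complex_of_real (inverse (r2 n G p a b)) *
     (\<Sum>z\<in>bvecs n. \<Sum>z'\<in>bvecs n. \<Sum>g\<in>{g\<in>G. Xi n g z = a \<and> Xi n g z' = b}.
        complex_of_real (p g) * \<Lambda> g A $$ (i,j)))"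

end

theory Submission
  imports Defs
begin

(* In characters of F_2^n the projector reads E_x = 2^-n sum_z chi_z(x) Z_z, so the Clifford
   conjugate g^dagger E_x g is the signed combination sum_z 2^-n chi_z(x) eps_z(g) sigma_{Xi_z(g)}.
   The frame operator is diagonal on Paulis, S sigma_a = s_a sigma_a, hence the estimator and the
   outcome probability are both character sums over z.  Summing their product over x,
   orthogonality of the characters couples the three indices as w = z + z'.  Because
   z |-> Xi_z(g) is additive and eps_z eps_z' eps_{z+z'} = (-1)^beta(Xi_z, Xi_z'), each triple
   (g, z, z') contributes the term of the commuting pair (Xi_z(g), Xi_z'(g)); grouping the
   triples by this pair assembles r_{a,a'} Lambda-bar_{a,a'}. *)

section \<open>Matrices\<close>

lemma mat_adjoint_dim [simp]:
  "dim_row (mat_adjoint (A :: complex mat)) = dim_col A"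
  "dim_col (mat_adjoint A) = dim_row A"
  unfolding mat_adjoint_def by auto

lemma index_mat_adjoint [simp]:
  "i < dim_col A \<Longrightarrow> j < dim_row A \<Longrightarrow> mat_adjoint (A :: complex mat) $$ (i, j) = cnj (A $$ (j, i))"
  unfolding mat_adjoint_def by (simp add: mat_of_rows_index)

lemma mat_adjoint_carrier [simp]:
  "(A :: complex mat) \<in> carrier_mat m k \<Longrightarrow> mat_adjoint A \<in> carrier_mat k m"
  by (metis mat_adjoint_dim carrier_matD carrier_matI)

lemma mat_adjoint_adjoint [simp]: "mat_adjoint (mat_adjoint A) = (A :: complex mat)"
  by (rule eq_matI) auto

lemma mat_adjoint_smult: "mat_adjoint (c \<cdot>\<^sub>m (A :: complex mat)) = cnj c \<cdot>\<^sub>m mat_adjoint A"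
  by (rule eq_matI) auto

lemma index_mult_mat_sum:
  "A \<in> carrier_mat m k \<Longrightarrow> B \<in> carrier_mat k l \<Longrightarrow> i < m \<Longrightarrow> j < l \<Longrightarrow>
   (A * B) $$ (i, j) = (\<Sum>t<k. A $$ (i, t) * B $$ (t, j))"
  by (auto simp: scalar_prod_def lessThan_atLeast0 intro!: sum.cong)

lemma mat_adjoint_mult:
  fixes A B :: "complex mat"
  assumes "A \<in> carrier_mat m k" "B \<in> carrier_mat k l"
  shows "mat_adjoint (A * B) = mat_adjoint B * mat_adjoint A"
proof (rule eq_matI)
  fix i j assume "i < dim_row (mat_adjoint B * mat_adjoint A)" "j < dim_col (mat_adjoint B * mat_adjoint A)"
  then have i: "i < l" and j: "j < m" using assms by auto
  have "mat_adjoint (A * B) $$ (i, j) = (\<Sum>t<k. cnj (A $$ (j, t)) * cnj (B $$ (t, i)))"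
    using i j assms by (simp del: index_mult_mat(1) add: index_mult_mat_sum[of A m k B l])
  also have "\<dots> = (mat_adjoint B * mat_adjoint A) $$ (i, j)"
    using i j assms
    by (simp del: index_mult_mat(1) add: index_mult_mat_sum[of _ l k _ m] mult.commute)
  finally show "mat_adjoint (A * B) $$ (i, j) = (mat_adjoint B * mat_adjoint A) $$ (i, j)" .
qed (use assms in auto)

lemma smult_smult_mat: "a \<cdot>\<^sub>m (b \<cdot>\<^sub>m A) = (a * b) \<cdot>\<^sub>m (A :: 'a :: semigroup_mult mat)"
  by (rule eq_matI) (auto simp: mult.assoc)

lemma one_smult_mat [simp]: "1 \<cdot>\<^sub>m A = (A :: 'a :: monoid_mult mat)"
  by (rule eq_matI) auto

lemma zero_smult_mat [simp]: "0 \<cdot>\<^sub>m (A :: 'a :: mult_zero mat) = 0\<^sub>m (dim_row A) (dim_col A)"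
  by (rule eq_matI) auto

lemma uminus_eq_smult_mat: "- A = (-1) \<cdot>\<^sub>m (A :: 'a :: ring_1 mat)"
  by (rule eq_matI) auto

lemma mult_smult_mult_mat:
  fixes A B C :: "complex mat"
  assumes "A \<in> carrier_mat d d" "B \<in> carrier_mat d d" "C \<in> carrier_mat d d"
  shows "A * (c \<cdot>\<^sub>m B) * C = c \<cdot>\<^sub>m (A * B * C)"
  unfolding mult_smult_distrib[OF assms(1,2)] by (rule mult_smult_assoc_mat) (use assms in auto)

lemma mult_carrier_mat_square [simp]:
  "A \<in> carrier_mat d d \<Longrightarrow> B \<in> carrier_mat d d \<Longrightarrow> A * B \<in> carrier_mat d d"
  by simp

lemma mtrace_smult: "A \<in> carrier_mat d d \<Longrightarrow> mtrace (c \<cdot>\<^sub>m A) = c * mtrace A"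
  by (simp add: mtrace_def sum_distrib_left)

lemma mtrace_mult_comm:
  fixes A B :: "complex mat"
  assumes "A \<in> carrier_mat d d" "B \<in> carrier_mat d d"
  shows "mtrace (A * B) = mtrace (B * A)"
proof -
  have "mtrace (A * B) = (\<Sum>i<d. \<Sum>k<d. A $$ (i, k) * B $$ (k, i))"
    unfolding mtrace_def using assms
    by (auto simp del: index_mult_mat(1) simp: index_mult_mat_sum[of _ d d _ d] intro!: sum.cong)
  also have "\<dots> = (\<Sum>k<d. \<Sum>i<d. B $$ (k, i) * A $$ (i, k))"
    by (subst sum.swap) (simp add: mult.commute)
  also have "\<dots> = mtrace (B * A)"
    unfolding mtrace_def using assms
    by (auto simp del: index_mult_mat(1) simp: index_mult_mat_sum[of _ d d _ d] intro!: sum.cong)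
  finally show ?thesis .
qed

lemma hs_eq_sum:
  assumes "A \<in> carrier_mat d d" "B \<in> carrier_mat d d"
  shows "hs A B = (\<Sum>i<d. \<Sum>k<d. cnj (A $$ (k, i)) * B $$ (k, i))"
  unfolding hs_def mtrace_def using assms
  by (auto simp del: index_mult_mat(1) simp: index_mult_mat_sum[of _ d d _ d] intro!: sum.cong)

lemma hs_smult_right:
  "A \<in> carrier_mat d d \<Longrightarrow> B \<in> carrier_mat d d \<Longrightarrow> hs A (c \<cdot>\<^sub>m B) = c * hs A B"
  by (simp add: hs_eq_sum sum_distrib_left mult.left_commute)

lemma hs_smult_left:
  "A \<in> carrier_mat d d \<Longrightarrow> B \<in> carrier_mat d d \<Longrightarrow> hs (c \<cdot>\<^sub>m A) B = cnj c * hs A B"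
  by (simp add: hs_eq_sum[of "c \<cdot>\<^sub>m A" d B] hs_eq_sum[of A d B] sum_distrib_left mult.assoc)

lemma Eproj_carrier [simp]: "Eproj d x \<in> carrier_mat d d"
  by (simp add: Eproj_def unitm_def)

lemma index_Eproj: "r < d \<Longrightarrow> c < d \<Longrightarrow> Eproj d x $$ (r, c) = (if r = x \<and> c = x then 1 else 0)"
  by (simp add: Eproj_def unitm_def)

lemma hs_Eproj:
  assumes "A \<in> carrier_mat d d" "x < d"
  shows "hs (Eproj d x) A = A $$ (x, x)"
proof -
  have "hs (Eproj d x) A = (\<Sum>i<d. \<Sum>k<d. if k = x then if i = x then A $$ (k, i) else 0 else 0)"
    unfolding hs_eq_sum[OF Eproj_carrier assms(1)] by (intro sum.cong refl) (simp add: index_Eproj)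
  then show ?thesis using assms(2) by simp
qed

lemma adjoint_conj_cancel:
  assumes "is_unitary d g" "A \<in> carrier_mat d d"
  shows "mat_adjoint g * (g * A * mat_adjoint g) * g = A"
proof -
  have g: "g \<in> carrier_mat d d" and "mat_adjoint g * g = 1\<^sub>m d"
    using assms(1) by (auto simp: is_unitary_def)
  moreover have "mat_adjoint g * (g * A * mat_adjoint g) * g = (mat_adjoint g * g) * A * (mat_adjoint g * g)"
    using g assms(2) by (simp add: assoc_mult_mat[of _ d d _ d _ d])
  ultimately show ?thesis using assms(2) by simp
qed

lemma conj_adjoint_cancel:
  assumes "is_unitary d g" "A \<in> carrier_mat d d"
  shows "g * (mat_adjoint g * A * g) * mat_adjoint g = A"
  using adjoint_conj_cancel[of d "mat_adjoint g" A] assms by (simp add: is_unitary_def)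

lemma adjoint_conj_mult:
  assumes "is_unitary d g" "A \<in> carrier_mat d d" "B \<in> carrier_mat d d"
  shows "(mat_adjoint g * A * g) * (mat_adjoint g * B * g) = mat_adjoint g * (A * B) * g"
proof -
  have g: "g \<in> carrier_mat d d" and "g * mat_adjoint g = 1\<^sub>m d"
    using assms(1) by (auto simp: is_unitary_def)
  moreover have "(mat_adjoint g * A * g) * (mat_adjoint g * B * g)
      = mat_adjoint g * A * (g * mat_adjoint g) * B * g"
    using g assms(2,3) by (simp add: assoc_mult_mat[of _ d d _ d _ d])
  ultimately show ?thesis using g assms(2,3) by (simp add: assoc_mult_mat[of _ d d _ d _ d])
qed

lemma hs_conj_eq_hs_adjoint_conj:
  assumes "g \<in> carrier_mat d d" "A \<in> carrier_mat d d" "B \<in> carrier_mat d d" "mat_adjoint A = A"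
  shows "hs A (g * B * mat_adjoint g) = hs (mat_adjoint g * A * g) B"
proof -
  have "hs A (g * B * mat_adjoint g) = mtrace ((A * g * B) * mat_adjoint g)"
    using assms by (simp add: hs_def assoc_mult_mat[of _ d d _ d _ d])
  also have "\<dots> = mtrace (mat_adjoint g * (A * g * B))"
    by (rule mtrace_mult_comm[of _ d]) (use assms in simp_all)
  also have "\<dots> = hs (mat_adjoint g * A * g) B"
    using assms by (simp add: hs_def mat_adjoint_mult[of _ d d _ d] assoc_mult_mat[of _ d d _ d _ d])
  finally show ?thesis .
qed

definition lincomb_mat :: "nat \<Rightarrow> 'i set \<Rightarrow> ('i \<Rightarrow> complex) \<Rightarrow> ('i \<Rightarrow> complex mat) \<Rightarrow> complex mat" where
  "lincomb_mat d I c M = mat d d (\<lambda>(i, j). \<Sum>k\<in>I. c k * M k $$ (i, j))"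

lemma lincomb_mat_carrier [simp]: "lincomb_mat d I c M \<in> carrier_mat d d"
  by (simp add: lincomb_mat_def)

lemma lincomb_mat_dim [simp]:
  "dim_row (lincomb_mat d I c M) = d" "dim_col (lincomb_mat d I c M) = d"
  by (simp_all add: lincomb_mat_def)

lemma index_lincomb_mat [simp]:
  "i < d \<Longrightarrow> j < d \<Longrightarrow> lincomb_mat d I c M $$ (i, j) = (\<Sum>k\<in>I. c k * M k $$ (i, j))"
  by (simp add: lincomb_mat_def)

lemma lincomb_mat_empty: "lincomb_mat d {} c M = 0\<^sub>m d d"
  by (rule eq_matI) auto

lemma lincomb_mat_cong:
  "(\<And>k. k \<in> I \<Longrightarrow> c k = c' k) \<Longrightarrow> (\<And>k. k \<in> I \<Longrightarrow> M k = M' k) \<Longrightarrow>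
   lincomb_mat d I c M = lincomb_mat d I c' M'"
  by (auto simp: lincomb_mat_def intro!: sum.cong)

lemma lincomb_mat_smult:
  "\<forall>k\<in>I. M k \<in> carrier_mat d d \<Longrightarrow>
   lincomb_mat d I c (\<lambda>k. a k \<cdot>\<^sub>m M k) = lincomb_mat d I (\<lambda>k. c k * a k) M"
  by (intro eq_matI) (auto simp: mult_ac intro!: sum.cong)

lemma mult_lincomb_mat:
  assumes "B \<in> carrier_mat d d" "\<forall>k\<in>I. M k \<in> carrier_mat d d"
  shows "B * lincomb_mat d I c M = lincomb_mat d I c (\<lambda>k. B * M k)"
    and "lincomb_mat d I c M * B = lincomb_mat d I c (\<lambda>k. M k * B)"
proof -
  show "B * lincomb_mat d I c M = lincomb_mat d I c (\<lambda>k. B * M k)"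
    using assms
    by (intro eq_matI) (auto simp del: index_mult_mat(1) simp: index_mult_mat_sum[of _ d d _ d]
        sum_distrib_left sum.swap[of _ "{..<d}"] mult_ac)
  show "lincomb_mat d I c M * B = lincomb_mat d I c (\<lambda>k. M k * B)"
    using assms
    by (intro eq_matI) (auto simp del: index_mult_mat(1) simp: index_mult_mat_sum[of _ d d _ d]
        sum_distrib_left sum_distrib_right sum.swap[of _ "{..<d}"] mult_ac)
qed

lemma hs_lincomb_mat:
  assumes "A \<in> carrier_mat d d" "\<forall>k\<in>I. M k \<in> carrier_mat d d"
  shows "hs A (lincomb_mat d I c M) = (\<Sum>k\<in>I. c k * hs A (M k))"
    and "hs (lincomb_mat d I c M) A = (\<Sum>k\<in>I. cnj (c k) * hs (M k) A)"
  using assms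
  by (simp_all add: hs_eq_sum[of _ d] sum_distrib_left sum_distrib_right sum.swap[of _ I]
      cnj_sum mult_ac)


section \<open>Sums over bit strings\<close>

lemma sum_lessThan_double:
  "(\<Sum>k<2 * m. g k) = (\<Sum>k<m. g (2 * k) + g (2 * k + 1))" for g :: "nat \<Rightarrow> 'a :: comm_monoid_add"
  by (induction m) (simp_all add: algebra_simps)

lemma sum_prod_bits:
  "(\<Sum>k::nat<2 ^ n. \<Prod>i<n. f i (bit k i)) = (\<Prod>i<n. f i False + f i True)"
  for f :: "nat \<Rightarrow> bool \<Rightarrow> 'a :: comm_semiring_1"
proof (induction n arbitrary: f)
  case 0
  then show ?case by simp
next
  case (Suc n)
  have bit0: "bit (2 * k) 0 = False" "bit (2 * k + 1) 0 = True" for k :: nat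
    by (simp_all add: bit_0)
  have bitSuc: "bit (2 * k) (Suc i) = bit k i" "bit (2 * k + 1) (Suc i) = bit k i" for k i :: nat
    by (simp_all add: bit_Suc)
  have "(\<Sum>k::nat<2 ^ Suc n. \<Prod>i<Suc n. f i (bit k i))
      = (\<Sum>k::nat<2 ^ n. (\<Prod>i<Suc n. f i (bit (2 * k) i)) + (\<Prod>i<Suc n. f i (bit (2 * k + 1) i)))"
    by (subst power_Suc, rule sum_lessThan_double)
  also have "\<dots> = (f 0 False + f 0 True) * (\<Sum>k::nat<2 ^ n. \<Prod>i<n. f (Suc i) (bit k i))"
    by (simp only: prod.lessThan_Suc_shift bit0 bitSuc) (simp add: algebra_simps sum.distrib sum_distrib_left)
  also have "\<dots> = (\<Prod>i<Suc n. f i False + f i True)"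
    using Suc[of "\<lambda>i. f (Suc i)"] by (simp only: prod.lessThan_Suc_shift)
  finally show ?case .
qed

lemma sum_Pow_prod:
  "finite A \<Longrightarrow> (\<Sum>z\<in>Pow A. \<Prod>i\<in>A. f i (i \<in> z)) = (\<Prod>i\<in>A. f i False + f i True)"
  for f :: "nat \<Rightarrow> bool \<Rightarrow> 'a :: comm_semiring_1"
proof -
  assume A: "finite A"
  have "(\<Prod>i\<in>A. f i False + f i True) = (\<Sum>X\<in>Pow A. (\<Prod>x\<in>X. f x True) * (\<Prod>x\<in>A - X. f x False))"
    using prod_add[OF A, of "\<lambda>i. f i True" "\<lambda>i. f i False"] by (simp add: add.commute)
  also have "\<dots> = (\<Sum>z\<in>Pow A. \<Prod>i\<in>A. f i (i \<in> z))"
  proof (rule sum.cong)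
    fix z assume "z \<in> Pow A"
    then have "A \<inter> {i. i \<in> z} = z" "A \<inter> - {i. i \<in> z} = A - z" by auto
    moreover have "(\<Prod>i\<in>A. f i (i \<in> z)) = (\<Prod>i\<in>A. if i \<in> z then f i True else f i False)"
      by (rule prod.cong) auto
    ultimately show "(\<Prod>x\<in>z. f x True) * (\<Prod>x\<in>A - z. f x False) = (\<Prod>i\<in>A. f i (i \<in> z))"
      by (simp add: prod.If_cases[OF A])
  qed simp
  finally show ?thesis ..
qed

lemma prod_two_or_zero:
  "(\<Prod>i<n. if P i then (2 :: complex) else 0) = (if \<forall>i<n. P i then 2 ^ n else 0)"
  by (auto intro: prod_zero)

lemma eq_iff_bits_below:
  "r < 2 ^ n \<Longrightarrow> c < 2 ^ n \<Longrightarrow> (\<forall>i<n. bit r i = bit c i) \<longleftrightarrow> r = c" for r c :: nat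
  by (metis bit_take_bit_iff take_bit_nat_eq_self_iff bit_eq_iff)


section \<open>Pauli operators\<close>

definition pauli_phase1 :: "bool \<Rightarrow> bool \<Rightarrow> bool \<Rightarrow> bool \<Rightarrow> complex" where
  "pauli_phase1 za xa zb xb =
     (if za \<and> \<not> xa \<and> \<not> zb \<and> xb then \<i>
      else if \<not> za \<and> xa \<and> zb \<and> \<not> xb then - \<i>
      else if za \<and> \<not> xa \<and> zb \<and> xb then - \<i>
      else if za \<and> xa \<and> zb \<and> \<not> xb then \<i>
      else if \<not> za \<and> xa \<and> zb \<and> xb then \<i>
      else if za \<and> xa \<and> \<not> zb \<and> xb then - \<i> else 1)"

definition pauli_phase :: "nat \<Rightarrow> nat set \<times> nat set \<Rightarrow> nat set \<times> nat set \<Rightarrow> complex" where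
  "pauli_phase n a b = (\<Prod>i<n. pauli_phase1 (i \<in> fst a) (i \<in> snd a) (i \<in> fst b) (i \<in> snd b))"

lemma sigma1_mult:
  "sigma1 za xa r False * sigma1 zb xb False c + sigma1 za xa r True * sigma1 zb xb True c
   = pauli_phase1 za xa zb xb * sigma1 (za \<noteq> zb) (xa \<noteq> xb) r c"
  by (cases za; cases xa; cases zb; cases xb; cases r; cases c) (simp_all add: sigma1_def pauli_phase1_def)

lemma sigma1_trace: "sigma1 z x False False + sigma1 z x True True = (if z \<or> x then 0 else 2)"
  by (cases z; cases x) (simp_all add: sigma1_def)

lemma cnj_sigma1: "cnj (sigma1 z x c r) = sigma1 z x r c"
  by (cases z; cases x; cases r; cases c) (simp_all add: sigma1_def)

lemma sigma1_Z: "sigma1 z False r c = (if r = c then (if z \<and> r then -1 else 1) else 0)"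
  by (cases z; cases r; cases c) (simp_all add: sigma1_def)

lemma pauli_phase_self: "pauli_phase n a a = 1"
proof -
  have "pauli_phase1 z x z x = 1" for z x
    by (cases z; cases x) (simp_all add: pauli_phase1_def)
  then show ?thesis by (simp add: pauli_phase_def)
qed

lemma pauli_phase_Z: "pauli_phase n (z, {}) (z', {}) = 1"
proof -
  have "pauli_phase1 z False z' False = 1" for z z'
    by (cases z; cases z') (simp_all add: pauli_phase1_def)
  then show ?thesis by (simp add: pauli_phase_def)
qed

lemma pauli_phase_nonzero: "pauli_phase n a b \<noteq> 0"
  by (simp add: pauli_phase_def pauli_phase1_def)

lemma pauli_carrier [simp]: "pauli n a \<in> carrier_mat (2 ^ n) (2 ^ n)"
  by (simp add: pauli_def)

lemma pauli_dim [simp]: "dim_row (pauli n a) = 2 ^ n" "dim_col (pauli n a) = 2 ^ n"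
  by (simp_all add: pauli_def)

lemma index_pauli:
  "r < 2 ^ n \<Longrightarrow> c < 2 ^ n \<Longrightarrow>
   pauli n a $$ (r, c) = (\<Prod>i<n. sigma1 (i \<in> fst a) (i \<in> snd a) (bit r i) (bit c i))"
  by (simp add: pauli_def)

lemma symd_iff [simp]: "i \<in> symd A B \<longleftrightarrow> (i \<in> A) \<noteq> (i \<in> B)"
  by (auto simp: symd_def)

lemma symd_commute: "symd A B = symd B A"
  by (auto simp: symd_def)

lemma padd_simps [simp]: "fst (padd a b) = symd (fst a) (fst b)" "snd (padd a b) = symd (snd a) (snd b)"
  by (simp_all add: padd_def)

lemma padd_commute: "padd a b = padd b a"
  by (simp add: padd_def symd_commute)

lemma pidx_iff: "a \<in> pidx n \<longleftrightarrow> fst a \<subseteq> {..<n} \<and> snd a \<subseteq> {..<n}"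
  by (cases a) (auto simp: pidx_def bvecs_def)

lemma finite_pidx [simp]: "finite (pidx n)"
  by (simp add: pidx_def bvecs_def)

lemma finite_bvecs [simp]: "finite (bvecs n)"
  by (simp add: bvecs_def)

lemma symd_bvecs: "z \<in> bvecs n \<Longrightarrow> z' \<in> bvecs n \<Longrightarrow> symd z z' \<in> bvecs n"
  by (auto simp: bvecs_def symd_def)

lemma padd_pidx: "a \<in> pidx n \<Longrightarrow> b \<in> pidx n \<Longrightarrow> padd a b \<in> pidx n"
  by (auto simp: pidx_iff)

lemma pauli_mult: "pauli n a * pauli n b = pauli_phase n a b \<cdot>\<^sub>m pauli n (padd a b)"
proof (rule eq_matI)
  fix r c assume "r < dim_row (pauli_phase n a b \<cdot>\<^sub>m pauli n (padd a b))"
    "c < dim_col (pauli_phase n a b \<cdot>\<^sub>m pauli n (padd a b))"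
  then have r: "r < 2 ^ n" and c: "c < 2 ^ n" by auto
  let ?s = "\<lambda>i a r c. sigma1 (i \<in> fst a) (i \<in> snd a) r c"
  have "(pauli n a * pauli n b) $$ (r, c) = (\<Sum>k::nat<2 ^ n. \<Prod>i<n. ?s i a (bit r i) (bit k i) * ?s i b (bit k i) (bit c i))"
    using r c
    by (simp del: index_mult_mat(1) add: index_mult_mat_sum[of _ "2 ^ n" "2 ^ n" _ "2 ^ n"] index_pauli prod.distrib)
  also have "\<dots> = (\<Prod>i<n. ?s i a (bit r i) False * ?s i b False (bit c i) + ?s i a (bit r i) True * ?s i b True (bit c i))"
    by (rule sum_prod_bits)
  also have "\<dots> = (pauli_phase n a b \<cdot>\<^sub>m pauli n (padd a b)) $$ (r, c)"
    using r c by (simp add: sigma1_mult index_pauli pauli_phase_def prod.distrib)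
  finally show "(pauli n a * pauli n b) $$ (r, c) = (pauli_phase n a b \<cdot>\<^sub>m pauli n (padd a b)) $$ (r, c)" .
qed auto

lemma mtrace_pauli:
  assumes "a \<in> pidx n"
  shows "mtrace (pauli n a) = (if a = ({}, {}) then 2 ^ n else 0)"
proof -
  have "mtrace (pauli n a) = (\<Sum>k::nat<2 ^ n. \<Prod>i<n. sigma1 (i \<in> fst a) (i \<in> snd a) (bit k i) (bit k i))"
    unfolding mtrace_def by (intro sum.cong) (auto simp: index_pauli)
  also have "\<dots> = (\<Prod>i<n. sigma1 (i \<in> fst a) (i \<in> snd a) False False + sigma1 (i \<in> fst a) (i \<in> snd a) True True)"
    by (rule sum_prod_bits)
  also have "\<dots> = (\<Prod>i<n. if \<not> (i \<in> fst a \<or> i \<in> snd a) then 2 else 0)"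
    by (intro prod.cong) (auto simp: sigma1_trace)
  also have "\<dots> = (if \<forall>i<n. \<not> (i \<in> fst a \<or> i \<in> snd a) then 2 ^ n else 0)"
    by (rule prod_two_or_zero)
  also have "(\<forall>i<n. \<not> (i \<in> fst a \<or> i \<in> snd a)) \<longleftrightarrow> a = ({}, {})"
    using assms by (cases a) (auto simp: pidx_iff)
  finally show ?thesis .
qed

lemma pauli_adjoint [simp]: "mat_adjoint (pauli n a) = pauli n a"
  by (rule eq_matI) (auto simp: index_pauli cnj_prod cnj_sigma1)

lemma hs_pauli:
  assumes "a \<in> pidx n" "b \<in> pidx n"
  shows "hs (pauli n a) (pauli n b) = (if a = b then 2 ^ n else 0)"
proof -
  have "hs (pauli n a) (pauli n b) = pauli_phase n a b * mtrace (pauli n (padd a b))"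
    unfolding hs_def pauli_adjoint pauli_mult by (rule mtrace_smult[of _ "2 ^ n"]) simp
  moreover have "padd a b = ({}, {}) \<longleftrightarrow> a = b"
    by (cases a; cases b) (auto simp: padd_def symd_def)
  ultimately show ?thesis
    using padd_pidx[OF assms] by (auto simp: mtrace_pauli pauli_phase_self)
qed

lemma smult_pauli_eq_imp_eq:
  assumes "a \<in> pidx n" "b \<in> pidx n" "c \<noteq> 0" "c \<cdot>\<^sub>m pauli n a = c' \<cdot>\<^sub>m pauli n b"
  shows "a = b"
proof (rule ccontr)
  assume "a \<noteq> b"
  then have "hs (pauli n a) (c' \<cdot>\<^sub>m pauli n b) = 0"
    by (simp add: hs_smult_right[of _ "2 ^ n"] hs_pauli[OF assms(1,2)])
  moreover have "hs (pauli n a) (c \<cdot>\<^sub>m pauli n a) = c * 2 ^ n"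
    by (simp add: hs_smult_right[of _ "2 ^ n"] hs_pauli[OF assms(1,1)])
  ultimately show False using assms(3,4) by simp
qed

lemma smult_pauli_eq_imp_coeff_eq:
  assumes "a \<in> pidx n" "c \<cdot>\<^sub>m pauli n a = c' \<cdot>\<^sub>m pauli n a"
  shows "c = c'"
proof -
  have "c * 2 ^ n = c' * 2 ^ n"
    using arg_cong[OF assms(2), of "hs (pauli n a)"] assms(1)
    by (simp add: hs_smult_right[of _ "2 ^ n"] hs_pauli)
  then show ?thesis by simp
qed

lemma Zop_eq_pauli: "Zop n z = pauli n (z, {})"
proof (rule eq_matI)
  fix r c assume "r < dim_row (pauli n (z, {}))" "c < dim_col (pauli n (z, {}))"
  then have r: "r < 2 ^ n" and c: "c < 2 ^ n" by auto
  show "Zop n z $$ (r, c) = pauli n (z, {}) $$ (r, c)"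
  proof (cases "r = c")
    case False
    then obtain i where "i < n" "bit r i \<noteq> bit c i" using eq_iff_bits_below[OF r c] by auto
    then have "pauli n (z, {}) $$ (r, c) = 0"
      using r c by (auto simp: index_pauli sigma1_Z)
    then show ?thesis using False r c by (simp add: Zop_def)
  qed (use r c in \<open>simp add: Zop_def index_pauli sigma1_Z\<close>)
qed (auto simp: Zop_def)

lemma Zop_carrier [simp]: "Zop n z \<in> carrier_mat (2 ^ n) (2 ^ n)"
  by (simp add: Zop_eq_pauli)

lemma Zop_mult: "Zop n z * Zop n z' = Zop n (symd z z')"
proof -
  have "padd (z, {}) (z', {}) = (symd z z', {})" by (simp add: padd_def symd_def)
  then show ?thesis by (simp add: Zop_eq_pauli pauli_mult pauli_phase_Z)
qed

lemma Zop_pidx: "z \<in> bvecs n \<Longrightarrow> (z, {}) \<in> pidx n"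
  by (simp add: pidx_def bvecs_def)


section \<open>Characters and the computational basis\<close>

definition zchar :: "nat \<Rightarrow> nat set \<Rightarrow> nat \<Rightarrow> complex" where
  "zchar n z x = (\<Prod>i<n. if i \<in> z \<and> bit x i then -1 else 1)"

lemma index_Zop: "r < 2 ^ n \<Longrightarrow> c < 2 ^ n \<Longrightarrow> Zop n z $$ (r, c) = (if r = c then zchar n z r else 0)"
  by (simp add: Zop_def zchar_def)

lemma cnj_zchar [simp]: "cnj (zchar n z x) = zchar n z x"
  unfolding zchar_def cnj_prod by (intro prod.cong) auto

lemma Eproj_eq_lincomb_Zop:
  assumes "x < 2 ^ n"
  shows "Eproj (2 ^ n) x = lincomb_mat (2 ^ n) (bvecs n) (\<lambda>z. zchar n z x / 2 ^ n) (Zop n)"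
proof (rule eq_matI)
  fix r c assume "r < dim_row (lincomb_mat (2 ^ n) (bvecs n) (\<lambda>z. zchar n z x / 2 ^ n) (Zop n))"
    "c < dim_col (lincomb_mat (2 ^ n) (bvecs n) (\<lambda>z. zchar n z x / 2 ^ n) (Zop n))"
  then have r: "r < 2 ^ n" and c: "c < 2 ^ n" by auto
  show "Eproj (2 ^ n) x $$ (r, c) = lincomb_mat (2 ^ n) (bvecs n) (\<lambda>z. zchar n z x / 2 ^ n) (Zop n) $$ (r, c)"
  proof (cases "r = c")
    case True
    have "(\<Sum>z\<in>bvecs n. zchar n z x * zchar n z r)
        = (\<Sum>z\<in>Pow {..<n}. \<Prod>i<n. if i \<in> z \<and> bit x i \<noteq> bit r i then -1 else 1)"
      unfolding bvecs_def zchar_def prod.distrib[symmetric] by (intro sum.cong prod.cong) auto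
    also have "\<dots> = (\<Prod>i<n. if bit x i = bit r i then 2 else 0)"
      by (subst sum_Pow_prod) (auto intro: prod.cong)
    also have "\<dots> = (if x = r then 2 ^ n else 0)"
      by (simp add: prod_two_or_zero eq_iff_bits_below[OF assms r])
    finally show ?thesis
      using True r by (simp add: index_Eproj index_Zop sum_divide_distrib[symmetric])
  qed (use r c in \<open>simp add: index_Eproj index_Zop\<close>)
qed (simp_all add: Eproj_def unitm_def)

lemma sum_zchar_triple:
  assumes "w \<in> bvecs n" "z \<in> bvecs n" "z' \<in> bvecs n"
  shows "(\<Sum>x<2 ^ n. zchar n w x * zchar n z x * zchar n z' x) = (if w = symd z z' then 2 ^ n else 0)"
proof -
  let ?sgn = "\<lambda>b. if b then -1 else (1 :: complex)"
  have "(\<Sum>x<2 ^ n. zchar n w x * zchar n z x * zchar n z' x)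
      = (\<Sum>x::nat<2 ^ n. \<Prod>i<n. ?sgn (i \<in> w \<and> bit x i) * ?sgn (i \<in> z \<and> bit x i) * ?sgn (i \<in> z' \<and> bit x i))"
    unfolding zchar_def prod.distrib by simp
  also have "\<dots> = (\<Prod>i<n. 1 + ?sgn (i \<in> w) * ?sgn (i \<in> z) * ?sgn (i \<in> z'))"
    by (subst sum_prod_bits) simp
  also have "\<dots> = (\<Prod>i<n. if (i \<in> w) = (i \<in> symd z z') then 2 else 0)"
    by (intro prod.cong) auto
  also have "\<dots> = (if \<forall>i<n. (i \<in> w) = (i \<in> symd z z') then 2 ^ n else 0)"
    by (rule prod_two_or_zero)
  also have "(\<forall>i<n. (i \<in> w) = (i \<in> symd z z')) \<longleftrightarrow> w = symd z z'"
    using assms by (auto simp: bvecs_def simp del: symd_iff) (auto simp: symd_def)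
  finally show ?thesis .
qed


section \<open>Clifford conjugation of Paulis\<close>

lemma i_pow_mod4: "\<i> ^ k = \<i> ^ (k mod 4)"
proof -
  have "\<i> ^ k = \<i> ^ (4 * (k div 4) + k mod 4)" by simp
  also have "\<dots> = (\<i> ^ 4) ^ (k div 4) * \<i> ^ (k mod 4)" by (simp only: power_add power_mult)
  finally show ?thesis by simp
qed

lemma i_pow_cases: "\<i> ^ k = 1 \<or> \<i> ^ k = \<i> \<or> \<i> ^ k = -1 \<or> \<i> ^ k = - \<i>"
proof -
  have "k mod 4 = 0 \<or> k mod 4 = 1 \<or> k mod 4 = 2 \<or> k mod 4 = 3" by linarith
  then show ?thesis
    by (subst (1 2 3 4) i_pow_mod4) (auto simp: numeral_3_eq_3 numeral_2_eq_2)
qed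

lemma real_i_pow:
  assumes "cnj (\<i> ^ k) = \<i> ^ k"
  shows "\<i> ^ k = 1 \<or> \<i> ^ k = -1"
  using i_pow_cases[of k] assms by (elim disjE) (simp_all add: complex_eq_iff)

lemma finite_pauli_group: "finite (pauli_group n)"
proof -
  have "pauli_group n \<subseteq> (\<lambda>(k, a). (\<i> ^ k) \<cdot>\<^sub>m pauli n a) ` ({..<4} \<times> pidx n)"
  proof
    fix Q assume "Q \<in> pauli_group n"
    then obtain k a where Q: "Q = (\<i> ^ k) \<cdot>\<^sub>m pauli n a" "a \<in> pidx n"
      by (auto simp: pauli_group_def)
    then have "Q = (\<lambda>(k, a). (\<i> ^ k) \<cdot>\<^sub>m pauli n a) (k mod 4, a)"
      by (simp add: i_pow_mod4[of k])
    then show "Q \<in> (\<lambda>(k, a). (\<i> ^ k) \<cdot>\<^sub>m pauli n a) ` ({..<4} \<times> pidx n)"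
      using Q(2) by force
  qed
  then show ?thesis by (rule finite_subset) simp
qed

lemma pauli_group_carrier: "Q \<in> pauli_group n \<Longrightarrow> Q \<in> carrier_mat (2 ^ n) (2 ^ n)"
  by (auto simp: pauli_group_def)

lemma Zop_in_pauli_group: "z \<in> bvecs n \<Longrightarrow> Zop n z \<in> pauli_group n"
  unfolding pauli_group_def Zop_eq_pauli by (force intro: exI[of _ 0] Zop_pidx)

lemma is_cliffordD:
  assumes "is_clifford n g"
  shows "is_unitary (2 ^ n) g" "g \<in> carrier_mat (2 ^ n) (2 ^ n)"
    "\<And>a. a \<in> pidx n \<Longrightarrow> g * pauli n a * mat_adjoint g \<in> pauli_group n"
  using assms by (auto simp: is_clifford_def is_unitary_def)

lemma clifford_conj_pauli_group:
  assumes "is_clifford n g"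
  shows "(\<lambda>Q. g * Q * mat_adjoint g) ` pauli_group n = pauli_group n"
proof (rule endo_inj_surj[OF finite_pauli_group])
  have g: "g \<in> carrier_mat (2 ^ n) (2 ^ n)" using is_cliffordD[OF assms] by auto
  show "(\<lambda>Q. g * Q * mat_adjoint g) ` pauli_group n \<subseteq> pauli_group n"
  proof clarify
    fix Q assume "Q \<in> pauli_group n"
    then obtain k a where Q: "Q = (\<i> ^ k) \<cdot>\<^sub>m pauli n a" and a: "a \<in> pidx n"
      by (auto simp: pauli_group_def)
    obtain j b where jb: "g * pauli n a * mat_adjoint g = (\<i> ^ j) \<cdot>\<^sub>m pauli n b" "b \<in> pidx n"
      using is_cliffordD(3)[OF assms a] by (auto simp: pauli_group_def)
    have "g * Q * mat_adjoint g = (\<i> ^ (k + j)) \<cdot>\<^sub>m pauli n b"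
      using g by (simp add: Q mult_smult_mult_mat jb smult_smult_mat power_add)
    then show "g * Q * mat_adjoint g \<in> pauli_group n"
      unfolding pauli_group_def using jb(2) by blast
  qed
  show "inj_on (\<lambda>Q. g * Q * mat_adjoint g) (pauli_group n)"
    by (rule inj_on_inverseI[of _ "\<lambda>Q. mat_adjoint g * Q * g"])
      (auto intro: adjoint_conj_cancel[OF is_cliffordD(1)[OF assms] pauli_group_carrier])
qed

lemma clifford_adjoint_conj_Zop:
  assumes "is_clifford n g" "z \<in> bvecs n"
  obtains b s where "b \<in> pidx n" "s = 1 \<or> s = -1" "mat_adjoint g * Zop n z * g = s \<cdot>\<^sub>m pauli n b"
proof -
  have U: "is_unitary (2 ^ n) g" and g: "g \<in> carrier_mat (2 ^ n) (2 ^ n)"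
    using is_cliffordD[OF assms(1)] by auto
  obtain Q where Q: "Q \<in> pauli_group n" "Zop n z = g * Q * mat_adjoint g"
    using Zop_in_pauli_group[OF assms(2)] clifford_conj_pauli_group[OF assms(1)] by force
  then obtain k b where kb: "Q = (\<i> ^ k) \<cdot>\<^sub>m pauli n b" "b \<in> pidx n"
    by (auto simp: pauli_group_def)
  have conj: "mat_adjoint g * Zop n z * g = Q"
    using adjoint_conj_cancel[OF U pauli_group_carrier[OF Q(1)]] Q(2) by simp
  have "mat_adjoint (mat_adjoint g * Zop n z * g) = mat_adjoint g * Zop n z * g"
    using g by (simp add: mat_adjoint_mult[of _ "2 ^ n" "2 ^ n" _ "2 ^ n"] Zop_eq_pauli
        assoc_mult_mat[of _ "2 ^ n" "2 ^ n" _ "2 ^ n" _ "2 ^ n"])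
  then have "cnj (\<i> ^ k) \<cdot>\<^sub>m pauli n b = (\<i> ^ k) \<cdot>\<^sub>m pauli n b"
    by (simp add: conj kb mat_adjoint_smult)
  then have "\<i> ^ k = 1 \<or> \<i> ^ k = -1"
    using real_i_pow smult_pauli_eq_imp_coeff_eq[OF kb(2)] by blast
  then show ?thesis using that kb conj by blast
qed

definition Xi_sign :: "nat \<Rightarrow> complex mat \<Rightarrow> nat set \<Rightarrow> complex" where
  "Xi_sign n g z = (if mat_adjoint g * Zop n z * g = pauli n (Xi n g z) then 1 else -1)"

lemma Xi_sign_cases: "Xi_sign n g z = 1 \<or> Xi_sign n g z = -1"
  by (simp add: Xi_sign_def)

lemma Xi_sign_square [simp]: "Xi_sign n g z * Xi_sign n g z = 1"
  using Xi_sign_cases[of n g z] by auto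

lemma cnj_Xi_sign [simp]: "cnj (Xi_sign n g z) = Xi_sign n g z"
  using Xi_sign_cases[of n g z] by auto

lemma Xi_sign_nonzero [simp]: "Xi_sign n g z \<noteq> 0"
  using Xi_sign_cases[of n g z] by auto

lemma Xi_pidx_and_adjoint_conj_Zop:
  assumes "is_clifford n g" "z \<in> bvecs n"
  shows "Xi n g z \<in> pidx n \<and> mat_adjoint g * Zop n z * g = Xi_sign n g z \<cdot>\<^sub>m pauli n (Xi n g z)"
proof -
  obtain b s where bs: "b \<in> pidx n" "s = 1 \<or> s = -1" "mat_adjoint g * Zop n z * g = s \<cdot>\<^sub>m pauli n b"
    using clifford_adjoint_conj_Zop[OF assms] .
  let ?C = "mat_adjoint g * Zop n z * g"
  have unique: "b' = b" if "b' \<in> pidx n \<and> (?C = pauli n b' \<or> ?C = - pauli n b')" for b'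
  proof -
    from that have b': "b' \<in> pidx n" and C: "?C = pauli n b' \<or> ?C = - pauli n b'" by auto
    obtain s' where "s' = 1 \<or> s' = -1" "s' \<cdot>\<^sub>m pauli n b' = s \<cdot>\<^sub>m pauli n b"
      using C bs(3) uminus_eq_smult_mat[of "pauli n b'"] one_smult_mat[of "pauli n b'"] by metis
    then show "b' = b" using smult_pauli_eq_imp_eq[OF b' bs(1), of s' s] by fastforce
  qed
  have "b \<in> pidx n \<and> (?C = pauli n b \<or> ?C = - pauli n b)"
    using bs by (auto simp: uminus_eq_smult_mat)
  then have "Xi n g z = b"
    unfolding Xi_def using unique by (rule the_equality)
  moreover have "?C = Xi_sign n g z \<cdot>\<^sub>m pauli n b"
  proof (cases "?C = pauli n b")
    case False
    with bs(2,3) have "s = -1" by auto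
    then show ?thesis using False bs(3) \<open>Xi n g z = b\<close> by (simp add: Xi_sign_def)
  qed (use \<open>Xi n g z = b\<close> in \<open>simp add: Xi_sign_def\<close>)
  ultimately show ?thesis using bs(1) by simp
qed

lemma Xi_pidx: "is_clifford n g \<Longrightarrow> z \<in> bvecs n \<Longrightarrow> Xi n g z \<in> pidx n"
  using Xi_pidx_and_adjoint_conj_Zop by blast

lemma adjoint_conj_Zop:
  "is_clifford n g \<Longrightarrow> z \<in> bvecs n \<Longrightarrow> mat_adjoint g * Zop n z * g = Xi_sign n g z \<cdot>\<^sub>m pauli n (Xi n g z)"
  using Xi_pidx_and_adjoint_conj_Zop by blast

lemma conj_pauli_Xi:
  assumes "is_clifford n g" "z \<in> bvecs n"
  shows "g * pauli n (Xi n g z) * mat_adjoint g = Xi_sign n g z \<cdot>\<^sub>m Zop n z"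
proof -
  have U: "is_unitary (2 ^ n) g" and g: "g \<in> carrier_mat (2 ^ n) (2 ^ n)"
    using is_cliffordD[OF assms(1)] by auto
  have "Zop n z = Xi_sign n g z \<cdot>\<^sub>m (g * pauli n (Xi n g z) * mat_adjoint g)"
    using conj_adjoint_cancel[OF U Zop_carrier, of z] g
    by (simp add: adjoint_conj_Zop[OF assms] mult_smult_mult_mat)
  then show ?thesis by (simp add: smult_smult_mat)
qed

text \<open>Conjugation by \<open>g\<close> is multiplicative and \<open>Z\<^sub>z Z\<^sub>z' = Z\<^bsub>z+z'\<^esub>\<close>, so
  \<open>z \<mapsto> \<Xi>\<^sub>z(g)\<close> is additive, and comparing the phases of the two sides of
  \<open>(g\<^sup>\<dagger> Z\<^sub>z g)(g\<^sup>\<dagger> Z\<^sub>z' g) = g\<^sup>\<dagger> Z\<^bsub>z+z'\<^esub> g\<close> ties the three signs to the Pauli phase.\<close>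

lemma Xi_symd_and_phase:
  assumes cg: "is_clifford n g" and z: "z \<in> bvecs n" and z': "z' \<in> bvecs n"
  shows "Xi n g (symd z z') = padd (Xi n g z) (Xi n g z')
    \<and> pauli_phase n (Xi n g z) (Xi n g z') = Xi_sign n g z * Xi_sign n g z' * Xi_sign n g (symd z z')"
proof -
  have U: "is_unitary (2 ^ n) g" using is_cliffordD[OF cg] by auto
  have zz: "symd z z' \<in> bvecs n" using z z' by (rule symd_bvecs)
  let ?a = "Xi n g z" and ?b = "Xi n g z'" and ?c = "Xi n g (symd z z')"
  let ?e = "Xi_sign n g z" and ?e' = "Xi_sign n g z'" and ?e'' = "Xi_sign n g (symd z z')"
  have "(?e * ?e' * pauli_phase n ?a ?b) \<cdot>\<^sub>m pauli n (padd ?a ?b) = (?e \<cdot>\<^sub>m pauli n ?a) * (?e' \<cdot>\<^sub>m pauli n ?b)"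
    by (simp add: mult_smult_distrib[OF smult_carrier_mat[OF pauli_carrier] pauli_carrier]
        mult_smult_assoc_mat[OF pauli_carrier pauli_carrier] pauli_mult smult_smult_mat mult_ac)
  also have "\<dots> = (mat_adjoint g * Zop n z * g) * (mat_adjoint g * Zop n z' * g)"
    using adjoint_conj_Zop[OF cg z] adjoint_conj_Zop[OF cg z'] by simp
  also have "\<dots> = ?e'' \<cdot>\<^sub>m pauli n ?c"
    by (simp add: adjoint_conj_mult[OF U] Zop_mult adjoint_conj_Zop[OF cg zz])
  finally have eq: "(?e * ?e' * pauli_phase n ?a ?b) \<cdot>\<^sub>m pauli n (padd ?a ?b) = ?e'' \<cdot>\<^sub>m pauli n ?c" .
  have c: "?c = padd ?a ?b"
    using smult_pauli_eq_imp_eq[OF padd_pidx Xi_pidx[OF cg zz] _ eq] Xi_pidx[OF cg] z z'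
    by (simp add: pauli_phase_nonzero)
  then have "?e * ?e' * pauli_phase n ?a ?b = ?e''"
    using smult_pauli_eq_imp_coeff_eq[OF Xi_pidx[OF cg zz]] eq by simp
  then have "(?e * ?e) * (?e' * ?e') * pauli_phase n ?a ?b = ?e * ?e' * ?e''"
    by (metis mult.assoc mult.left_commute)
  then show ?thesis using c by simp
qed

lemma Xi_symd: "is_clifford n g \<Longrightarrow> z \<in> bvecs n \<Longrightarrow> z' \<in> bvecs n \<Longrightarrow>
  Xi n g (symd z z') = padd (Xi n g z) (Xi n g z')"
  using Xi_symd_and_phase by blast

lemma pauli_phase_Xi: "is_clifford n g \<Longrightarrow> z \<in> bvecs n \<Longrightarrow> z' \<in> bvecs n \<Longrightarrow>
  pauli_phase n (Xi n g z) (Xi n g z') = Xi_sign n g z * Xi_sign n g z' * Xi_sign n g (symd z z')"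
  using Xi_symd_and_phase by blast

lemma pcommute_Xi:
  assumes "is_clifford n g" "z \<in> bvecs n" "z' \<in> bvecs n"
  shows "pcommute n (Xi n g z) (Xi n g z')"
proof -
  have "pauli_phase n (Xi n g z') (Xi n g z) = pauli_phase n (Xi n g z) (Xi n g z')"
    using assms by (simp add: pauli_phase_Xi symd_commute mult_ac)
  then show ?thesis unfolding pcommute_def pauli_mult by (simp add: padd_commute)
qed

lemma power_pbeta:
  assumes "a \<in> pidx n" "b \<in> pidx n" "pauli_phase n a b = 1 \<or> pauli_phase n a b = -1"
  shows "(-1) ^ pbeta n a b = pauli_phase n a b"
proof -
  define k0 where "k0 = (if pauli_phase n a b = 1 then 0 else 1 :: nat)"
  have k0: "k0 < 2 \<and> pauli n a * pauli n b = ((-1) ^ k0) \<cdot>\<^sub>m pauli n (padd a b)"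
    using assms(3) by (auto simp: k0_def pauli_mult)
  have "k = k0" if "k < 2 \<and> pauli n a * pauli n b = ((-1) ^ k) \<cdot>\<^sub>m pauli n (padd a b)" for k
  proof -
    have "(-1 :: complex) ^ k = (-1) ^ k0"
      using that k0 smult_pauli_eq_imp_coeff_eq[OF padd_pidx[OF assms(1,2)]] by simp
    then show "k = k0" using that k0 by (cases k; cases k0) auto
  qed
  then have "pbeta n a b = k0" unfolding pbeta_def using k0 by (rule the_equality[rotated])
  then show ?thesis using assms(3) by (auto simp: k0_def)
qed

lemma power_pbeta_Xi:
  assumes "is_clifford n g" "z \<in> bvecs n" "z' \<in> bvecs n"
  shows "(-1) ^ pbeta n (Xi n g z) (Xi n g z') = Xi_sign n g z * Xi_sign n g z' * Xi_sign n g (symd z z')"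
proof -
  have "pauli_phase n (Xi n g z) (Xi n g z') = 1 \<or> pauli_phase n (Xi n g z) (Xi n g z') = -1"
    using assms Xi_sign_cases[of n g z] Xi_sign_cases[of n g z'] Xi_sign_cases[of n g "symd z z'"]
    by (auto simp: pauli_phase_Xi)
  then show ?thesis using assms by (simp add: power_pbeta Xi_pidx pauli_phase_Xi)
qed


section \<open>The measurement channel and the frame operator\<close>

lemma Mch_eq_diag:
  assumes "A \<in> carrier_mat (2 ^ n) (2 ^ n)"
  shows "Mch n A = mat (2 ^ n) (2 ^ n) (\<lambda>(i, j). if i = j then A $$ (i, i) else 0)"
proof (rule eq_matI)
  fix i j assume "i < dim_row (mat (2 ^ n) (2 ^ n) (\<lambda>(i, j). if i = j then A $$ (i, i) else 0))"
    "j < dim_col (mat (2 ^ n) (2 ^ n) (\<lambda>(i, j). if i = j then A $$ (i, i) else 0))"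
  then have i: "i < 2 ^ n" and j: "j < 2 ^ n" by auto
  have "Mch n A $$ (i, j) = (\<Sum>x<2 ^ n. hs (Eproj (2 ^ n) x) A * Eproj (2 ^ n) x $$ (i, j))"
    unfolding Mch_def using i j by simp
  also have "\<dots> = (\<Sum>x<2 ^ n. if x = i then (if i = j then A $$ (i, i) else 0) else 0)"
    by (intro sum.cong refl) (use i j assms in \<open>auto simp: hs_Eproj index_Eproj\<close>)
  finally show "Mch n A $$ (i, j) = mat (2 ^ n) (2 ^ n) (\<lambda>(i, j). if i = j then A $$ (i, i) else 0) $$ (i, j)"
    using i j by simp
qed (auto simp: Mch_def)

lemma Mch_carrier [simp]: "Mch n A \<in> carrier_mat (2 ^ n) (2 ^ n)"
  by (simp add: Mch_def)

lemma Mch_lincomb: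
  "\<forall>k\<in>I. M k \<in> carrier_mat (2 ^ n) (2 ^ n) \<Longrightarrow>
   Mch n (lincomb_mat (2 ^ n) I c M) = lincomb_mat (2 ^ n) I c (\<lambda>k. Mch n (M k))"
  by (intro eq_matI) (auto simp: Mch_eq_diag sum.neutral)

lemma Mch_smult: "A \<in> carrier_mat (2 ^ n) (2 ^ n) \<Longrightarrow> Mch n (c \<cdot>\<^sub>m A) = c \<cdot>\<^sub>m Mch n A"
  by (intro eq_matI) (auto simp: Mch_eq_diag)

lemma Mch_pauli:
  assumes "b \<in> pidx n"
  shows "Mch n (pauli n b) = (if snd b = {} then pauli n b else 0\<^sub>m (2 ^ n) (2 ^ n))"
proof (rule eq_matI)
  fix i j assume "i < dim_row (if snd b = {} then pauli n b else 0\<^sub>m (2 ^ n) (2 ^ n))"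
    "j < dim_col (if snd b = {} then pauli n b else 0\<^sub>m (2 ^ n) (2 ^ n))"
  then have i: "i < 2 ^ n" and j: "j < 2 ^ n" by (auto split: if_splits)
  show "Mch n (pauli n b) $$ (i, j) = (if snd b = {} then pauli n b else 0\<^sub>m (2 ^ n) (2 ^ n)) $$ (i, j)"
  proof (cases "snd b = {}")
    case True
    then have "pauli n b = Zop n (fst b)" by (cases b) (simp add: Zop_eq_pauli)
    then show ?thesis using True i j by (simp add: Mch_eq_diag index_Zop)
  next
    case False
    then obtain t where t: "t \<in> snd b" by auto
    with assms have "t < n" by (auto simp: pidx_iff)
    with t i have "pauli n b $$ (i, i) = 0"
      by (simp add: index_pauli) (rule bexI[of _ t], auto simp: sigma1_def)
    then show ?thesis using False i j by (auto simp: Mch_eq_diag)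
  qed
qed (auto simp: Mch_def)

lemma Sop_carrier [simp]: "Sop n G p A \<in> carrier_mat (2 ^ n) (2 ^ n)"
  by (simp add: Sop_def)

lemma Sop_lincomb:
  assumes "\<forall>g\<in>G. g \<in> carrier_mat (2 ^ n) (2 ^ n)" "\<forall>k\<in>I. M k \<in> carrier_mat (2 ^ n) (2 ^ n)"
  shows "Sop n G p (lincomb_mat (2 ^ n) I c M) = lincomb_mat (2 ^ n) I c (\<lambda>k. Sop n G p (M k))"
proof -
  have conj: "mat_adjoint g * Mch n (g * lincomb_mat (2 ^ n) I c M * mat_adjoint g) * g
      = lincomb_mat (2 ^ n) I c (\<lambda>k. mat_adjoint g * Mch n (g * M k * mat_adjoint g) * g)" if "g \<in> G" for g
    using that assms by (simp add: mult_lincomb_mat Mch_lincomb)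
  show ?thesis
    by (rule eq_matI)
      (auto simp: Sop_def conj sum_distrib_left sum.swap[of _ I] mult_ac cong: sum.cong)
qed

lemma Sop_zero:
  "\<forall>g\<in>G. g \<in> carrier_mat (2 ^ n) (2 ^ n) \<Longrightarrow> Sop n G p (0\<^sub>m (2 ^ n) (2 ^ n)) = 0\<^sub>m (2 ^ n) (2 ^ n)"
  using Sop_lincomb[of G n "{}" "\<lambda>_. 0\<^sub>m (2 ^ n) (2 ^ n)" p "\<lambda>_. 0"] by (simp add: lincomb_mat_empty)


lemma Xi_fiber:
  assumes cg: "is_clifford n g" and a: "a \<in> pidx n" and b: "(bz, bx) \<in> pidx n" and "c \<noteq> 0"
    and conj: "g * pauli n a * mat_adjoint g = c \<cdot>\<^sub>m pauli n (bz, bx)"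
  shows "{z \<in> bvecs n. Xi n g z = a} = (if bx = {} then {bz} else {})"
proof -
  have U: "is_unitary (2 ^ n) g" and g: "g \<in> carrier_mat (2 ^ n) (2 ^ n)"
    using is_cliffordD[OF cg] by auto
  have "Xi n g z = a \<longleftrightarrow> bz = z \<and> bx = {}" if z: "z \<in> bvecs n" for z
  proof
    assume "Xi n g z = a"
    then have "c \<cdot>\<^sub>m pauli n (bz, bx) = Xi_sign n g z \<cdot>\<^sub>m pauli n (z, {})"
      using conj conj_pauli_Xi[OF cg z] by (simp add: Zop_eq_pauli)
    then show "bz = z \<and> bx = {}" using smult_pauli_eq_imp_eq[OF b Zop_pidx[OF z] \<open>c \<noteq> 0\<close>] by simp
  next
    assume "bz = z \<and> bx = {}"
    then have "pauli n a = mat_adjoint g * (c \<cdot>\<^sub>m Zop n z) * g"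
      using adjoint_conj_cancel[OF U pauli_carrier[of n a]] conj by (simp add: Zop_eq_pauli)
    also have "\<dots> = c \<cdot>\<^sub>m (mat_adjoint g * Zop n z * g)"
      by (rule mult_smult_mult_mat) (use g in auto)
    finally have "1 \<cdot>\<^sub>m pauli n a = (c * Xi_sign n g z) \<cdot>\<^sub>m pauli n (Xi n g z)"
      by (simp add: adjoint_conj_Zop[OF cg z] smult_smult_mat)
    then have "a = Xi n g z" by (rule smult_pauli_eq_imp_eq[OF a Xi_pidx[OF cg z] one_neq_zero])
    then show "Xi n g z = a" ..
  qed
  moreover have "bz \<in> bvecs n" using b by (simp add: pidx_def)
  ultimately show ?thesis by auto
qed

lemma adjoint_conj_Mch_conj_pauli:
  assumes cg: "is_clifford n g" and a: "a \<in> pidx n"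
  shows "mat_adjoint g * Mch n (g * pauli n a * mat_adjoint g) * g
       = of_nat (card {z \<in> bvecs n. Xi n g z = a}) \<cdot>\<^sub>m pauli n a"
proof -
  have U: "is_unitary (2 ^ n) g" and g: "g \<in> carrier_mat (2 ^ n) (2 ^ n)"
    using is_cliffordD[OF cg] by auto
  obtain k bz bx where kb: "g * pauli n a * mat_adjoint g = (\<i> ^ k) \<cdot>\<^sub>m pauli n (bz, bx)" "(bz, bx) \<in> pidx n"
    using is_cliffordD(3)[OF cg a] by (auto simp: pauli_group_def)
  have Mch: "Mch n (g * pauli n a * mat_adjoint g)
      = (if bx = {} then g * pauli n a * mat_adjoint g else 0\<^sub>m (2 ^ n) (2 ^ n))"
    using kb Mch_pauli[OF kb(2)] by (simp add: Mch_smult)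
  have fiber: "{z \<in> bvecs n. Xi n g z = a} = (if bx = {} then {bz} else {})"
    using Xi_fiber[OF cg a kb(2) _ kb(1)] by simp
  show ?thesis
  proof (cases "bx = {}")
    case True
    then show ?thesis using Mch fiber adjoint_conj_cancel[OF U pauli_carrier[of n a]] by simp
  next
    case False
    with fiber have "{z \<in> bvecs n. Xi n g z = a} = {}" by simp
    then show ?thesis unfolding \<open>{z \<in> bvecs n. Xi n g z = a} = {}\<close> using Mch False g by simp
  qed
qed

lemma sum_sum_filter_eq_sum_card:
  fixes f :: "'a \<Rightarrow> 'c :: comm_semiring_1"
  assumes "finite A" "finite B"
  shows "(\<Sum>z\<in>A. \<Sum>g\<in>{g\<in>B. P g z}. f g) = (\<Sum>g\<in>B. f g * of_nat (card {z\<in>A. P g z}))"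
proof -
  have "(\<Sum>z\<in>A. \<Sum>g\<in>{g\<in>B. P g z}. f g) = (\<Sum>g\<in>B. \<Sum>z\<in>A. if P g z then f g else 0)"
    using assms by (simp add: sum.inter_filter sum.swap[of _ A])
  also have "\<dots> = (\<Sum>g\<in>B. f g * of_nat (card {z\<in>A. P g z}))"
    using assms(1) by (simp add: sum.inter_filter[symmetric] mult.commute)
  finally show ?thesis .
qed

lemma Sop_pauli:
  assumes "finite G" "\<forall>g\<in>G. is_clifford n g" "a \<in> pidx n"
  shows "Sop n G p (pauli n a) = complex_of_real (s1 n G p a) \<cdot>\<^sub>m pauli n a"
proof (rule eq_matI)
  fix i j assume "i < dim_row (complex_of_real (s1 n G p a) \<cdot>\<^sub>m pauli n a)"
    "j < dim_col (complex_of_real (s1 n G p a) \<cdot>\<^sub>m pauli n a)"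
  then have i: "i < 2 ^ n" and j: "j < 2 ^ n" by auto
  have s1: "s1 n G p a = (\<Sum>g\<in>G. p g * real (card {z\<in>bvecs n. Xi n g z = a}))"
    unfolding s1_def using assms(1) by (rule sum_sum_filter_eq_sum_card[OF finite_bvecs])
  have "Sop n G p (pauli n a) $$ (i, j)
      = (\<Sum>g\<in>G. complex_of_real (p g) * (of_nat (card {z \<in> bvecs n. Xi n g z = a}) * pauli n a $$ (i, j)))"
    unfolding Sop_def using i j assms by (simp add: adjoint_conj_Mch_conj_pauli cong: sum.cong)
  also have "\<dots> = complex_of_real (s1 n G p a) * pauli n a $$ (i, j)"
    by (simp add: s1 sum_distrib_left sum_distrib_right mult_ac)
  finally show "Sop n G p (pauli n a) $$ (i, j) = (complex_of_real (s1 n G p a) \<cdot>\<^sub>m pauli n a) $$ (i, j)"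
    using i j by simp
qed (auto simp: Sop_def)

lemma s1_nonzero:
  assumes "finite G" "\<forall>g\<in>G. is_clifford n g" "a \<in> pidx n"
    and bij: "bij_betw (Sop n G p) (carrier_mat (2 ^ n) (2 ^ n)) (carrier_mat (2 ^ n) (2 ^ n))"
  shows "s1 n G p a \<noteq> 0"
proof
  assume "s1 n G p a = 0"
  moreover have "\<forall>g\<in>G. g \<in> carrier_mat (2 ^ n) (2 ^ n)" using assms(2) is_cliffordD by blast
  ultimately have "Sop n G p (pauli n a) = Sop n G p (0\<^sub>m (2 ^ n) (2 ^ n))"
    using Sop_pauli[OF assms(1-3)] Sop_zero by simp
  then have "pauli n a = 0\<^sub>m (2 ^ n) (2 ^ n)"
    using bij_betw_imp_inj_on[OF bij] by (simp add: inj_on_def)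
  then have "hs (pauli n a) (pauli n a) = 0" by (simp add: hs_eq_sum[of _ "2 ^ n"])
  then show False using hs_pauli[OF assms(3,3)] by simp
qed

lemma Sinv_Sop:
  "bij_betw (Sop n G p) (carrier_mat (2 ^ n) (2 ^ n)) (carrier_mat (2 ^ n) (2 ^ n)) \<Longrightarrow>
   X \<in> carrier_mat (2 ^ n) (2 ^ n) \<Longrightarrow> Sinv n G p (Sop n G p X) = X"
  unfolding Sinv_def by (rule the_inv_into_f_f[OF bij_betw_imp_inj_on])


section \<open>The estimator and the outcome distribution\<close>

lemma adjoint_conj_Eproj:
  assumes cg: "is_clifford n g" and x: "x < 2 ^ n"
  shows "mat_adjoint g * Eproj (2 ^ n) x * g
    = lincomb_mat (2 ^ n) (bvecs n) (\<lambda>z. zchar n z x / 2 ^ n * Xi_sign n g z) (\<lambda>z. pauli n (Xi n g z))"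
proof -
  have g: "g \<in> carrier_mat (2 ^ n) (2 ^ n)" using is_cliffordD[OF cg] by auto
  have "mat_adjoint g * Eproj (2 ^ n) x * g
      = lincomb_mat (2 ^ n) (bvecs n) (\<lambda>z. zchar n z x / 2 ^ n) (\<lambda>z. mat_adjoint g * Zop n z * g)"
    using g by (simp add: Eproj_eq_lincomb_Zop[OF x] mult_lincomb_mat)
  also have "\<dots> = lincomb_mat (2 ^ n) (bvecs n) (\<lambda>z. zchar n z x / 2 ^ n) (\<lambda>z. Xi_sign n g z \<cdot>\<^sub>m pauli n (Xi n g z))"
    by (intro lincomb_mat_cong) (simp_all add: adjoint_conj_Zop[OF cg])
  finally show ?thesis by (simp add: lincomb_mat_smult)
qed

lemma Sinv_adjoint_conj_Eproj:
  assumes fin: "finite G" and cl: "\<forall>g\<in>G. is_clifford n g"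
    and bij: "bij_betw (Sop n G p) (carrier_mat (2 ^ n) (2 ^ n)) (carrier_mat (2 ^ n) (2 ^ n))"
    and g: "g \<in> G" and x: "x < 2 ^ n"
  shows "Sinv n G p (mat_adjoint g * Eproj (2 ^ n) x * g)
    = lincomb_mat (2 ^ n) (bvecs n) (\<lambda>z. zchar n z x / 2 ^ n * Xi_sign n g z / s1 n G p (Xi n g z))
        (\<lambda>z. pauli n (Xi n g z))"
    (is "_ = ?Y")
proof -
  have cg: "is_clifford n g" using cl g by auto
  have "\<forall>g\<in>G. g \<in> carrier_mat (2 ^ n) (2 ^ n)" using cl is_cliffordD by blast
  then have "Sop n G p ?Y
      = lincomb_mat (2 ^ n) (bvecs n) (\<lambda>z. zchar n z x / 2 ^ n * Xi_sign n g z / s1 n G p (Xi n g z)) (\<lambda>z. complex_of_real (s1 n G p (Xi n g z)) \<cdot>\<^sub>m pauli n (Xi n g z))"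
    by (simp add: Sop_lincomb Sop_pauli[OF fin cl Xi_pidx[OF cg]] cong: lincomb_mat_cong)
  also have "\<dots> = lincomb_mat (2 ^ n) (bvecs n) (\<lambda>z. zchar n z x / 2 ^ n * Xi_sign n g z) (\<lambda>z. pauli n (Xi n g z))"
    by (simp add: lincomb_mat_smult s1_nonzero[OF fin cl Xi_pidx[OF cg] bij] cong: lincomb_mat_cong)
  also have "\<dots> = mat_adjoint g * Eproj (2 ^ n) x * g"
    by (rule adjoint_conj_Eproj[OF cg x, symmetric])
  finally have S: "Sop n G p ?Y = mat_adjoint g * Eproj (2 ^ n) x * g" .
  show ?thesis unfolding S[symmetric] by (rule Sinv_Sop[OF bij lincomb_mat_carrier])
qed

lemma ohat_eq:
  assumes "finite G" "\<forall>g\<in>G. is_clifford n g"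
    and "bij_betw (Sop n G p) (carrier_mat (2 ^ n) (2 ^ n)) (carrier_mat (2 ^ n) (2 ^ n))"
    and "g \<in> G" "x < 2 ^ n" "Obs \<in> carrier_mat (2 ^ n) (2 ^ n)"
  shows "ohat n G p Obs g x = (\<Sum>z\<in>bvecs n.
    zchar n z x / 2 ^ n * Xi_sign n g z / s1 n G p (Xi n g z) * hs Obs (pauli n (Xi n g z)))"
  unfolding ohat_def Sinv_adjoint_conj_Eproj[OF assms(1-5)]
  by (rule hs_lincomb_mat(1)[OF assms(6)]) simp

lemma outprob_eq:
  assumes cg: "is_clifford n g" and x: "x < 2 ^ n" and L: "\<Lambda> g \<rho> \<in> carrier_mat (2 ^ n) (2 ^ n)"
  shows "outprob \<Lambda> \<rho> g x
    = (\<Sum>z\<in>bvecs n. zchar n z x / 2 ^ n * (Xi_sign n g z * hs (pauli n (Xi n g z)) (\<Lambda> g \<rho>)))"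
proof -
  have g: "g \<in> carrier_mat (2 ^ n) (2 ^ n)" using is_cliffordD[OF cg] by auto
  have "outprob \<Lambda> \<rho> g x = hs (Eproj (2 ^ n) x) (g * \<Lambda> g \<rho> * mat_adjoint g)"
    unfolding outprob_def using g L x by (simp add: hs_Eproj)
  also have "\<dots> = (\<Sum>z\<in>bvecs n. zchar n z x / 2 ^ n * hs (Zop n z) (g * \<Lambda> g \<rho> * mat_adjoint g))"
    using g L by (simp add: Eproj_eq_lincomb_Zop[OF x] hs_lincomb_mat(2))
  also have "\<dots> = (\<Sum>z\<in>bvecs n. zchar n z x / 2 ^ n * hs (mat_adjoint g * Zop n z * g) (\<Lambda> g \<rho>))"
    using g L by (simp add: hs_conj_eq_hs_adjoint_conj[of _ "2 ^ n"] Zop_eq_pauli)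
  also have "\<dots> = (\<Sum>z\<in>bvecs n. zchar n z x / 2 ^ n * (Xi_sign n g z * hs (pauli n (Xi n g z)) (\<Lambda> g \<rho>)))"
    by (intro sum.cong refl) (simp add: adjoint_conj_Zop[OF cg] hs_smult_left[OF pauli_carrier L])
  finally show ?thesis .
qed


section \<open>The second moment\<close>

lemma sum_zchar_mult_square:
  "(\<Sum>x<2 ^ n. (\<Sum>w\<in>bvecs n. zchar n w x * A w) * (\<Sum>z\<in>bvecs n. zchar n z x * B z)\<^sup>2)
   = 2 ^ n * (\<Sum>z\<in>bvecs n. \<Sum>z'\<in>bvecs n. A (symd z z') * B z * B z')"
proof -
  have square: "(\<Sum>z\<in>bvecs n. zchar n z x * B z)\<^sup>2
      = (\<Sum>z\<in>bvecs n. \<Sum>z'\<in>bvecs n. (zchar n z x * B z) * (zchar n z' x * B z'))" for x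
    by (simp only: power2_eq_square sum_product)
  have expand: "(\<Sum>w\<in>bvecs n. zchar n w x * A w) * (\<Sum>z\<in>bvecs n. zchar n z x * B z)\<^sup>2
      = (\<Sum>w\<in>bvecs n. \<Sum>z\<in>bvecs n. \<Sum>z'\<in>bvecs n.
           (zchar n w x * zchar n z x * zchar n z' x) * (A w * B z * B z'))" for x
    unfolding square sum_distrib_right unfolding sum_distrib_left by (intro sum.cong refl) (simp add: mult_ac)
  have "(\<Sum>x<2 ^ n. (\<Sum>w\<in>bvecs n. zchar n w x * A w) * (\<Sum>z\<in>bvecs n. zchar n z x * B z)\<^sup>2)
      = (\<Sum>x<2 ^ n. \<Sum>w\<in>bvecs n. \<Sum>z\<in>bvecs n. \<Sum>z'\<in>bvecs n.
           (zchar n w x * zchar n z x * zchar n z' x) * (A w * B z * B z'))"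
    by (simp only: expand)
  also have "\<dots> = (\<Sum>w\<in>bvecs n. \<Sum>z\<in>bvecs n. \<Sum>z'\<in>bvecs n.
           (\<Sum>x<2 ^ n. zchar n w x * zchar n z x * zchar n z' x) * (A w * B z * B z'))"
    by (simp only: sum.swap[of _ "{..<2 ^ n}"] sum_distrib_right)
  also have "\<dots> = (\<Sum>w\<in>bvecs n. \<Sum>z\<in>bvecs n. \<Sum>z'\<in>bvecs n.
      if w = symd z z' then 2 ^ n * (A w * B z * B z') else 0)"
    by (intro sum.cong refl) (simp add: sum_zchar_triple)
  also have "\<dots> = (\<Sum>z\<in>bvecs n. \<Sum>z'\<in>bvecs n. \<Sum>w\<in>bvecs n.
      if w = symd z z' then 2 ^ n * (A w * B z * B z') else 0)"
    by (subst sum.swap) (intro sum.cong refl sum.swap)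
  also have "\<dots> = 2 ^ n * (\<Sum>z\<in>bvecs n. \<Sum>z'\<in>bvecs n. A (symd z z') * B z * B z')"
    by (simp add: symd_bvecs sum_distrib_left mult.assoc cong: sum.cong)
  finally show ?thesis .
qed

lemma hs_npauli:
  assumes "A \<in> carrier_mat (2 ^ n) (2 ^ n)"
  shows "hs A (npauli n a) = hs A (pauli n a) / complex_of_real (sqrt (real (2 ^ n)))"
    and "hs (npauli n a) A = hs (pauli n a) A / complex_of_real (sqrt (real (2 ^ n)))"
  using assms by (simp_all add: npauli_def hs_smult_right[of _ "2 ^ n"] hs_smult_left[of _ "2 ^ n"])

definition moment_term ::
    "nat \<Rightarrow> complex mat set \<Rightarrow> (complex mat \<Rightarrow> real) \<Rightarrow> complex mat \<Rightarrow>
     nat set \<times> nat set \<Rightarrow> nat set \<times> nat set \<Rightarrow> complex mat \<Rightarrow> complex" where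
  "moment_term n G p Obs a b L =
     complex_of_real ((-1) ^ pbeta n a b / (s1 n G p a * s1 n G p b)) *
     hs Obs (npauli n a) * hs Obs (npauli n b) * hs (npauli n (padd a b)) L"

lemma Xi_summand_eq_moment_term:
  assumes cg: "is_clifford n g" and z: "z \<in> bvecs n" and z': "z' \<in> bvecs n"
    and Obs: "Obs \<in> carrier_mat (2 ^ n) (2 ^ n)" and L: "L \<in> carrier_mat (2 ^ n) (2 ^ n)"
  shows "2 ^ n * (Xi_sign n g (symd z z') * hs (pauli n (Xi n g (symd z z'))) L / 2 ^ n
      * (Xi_sign n g z / s1 n G p (Xi n g z) * hs Obs (pauli n (Xi n g z)) / 2 ^ n)
      * (Xi_sign n g z' / s1 n G p (Xi n g z') * hs Obs (pauli n (Xi n g z')) / 2 ^ n))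
    = 1 / complex_of_real (sqrt (real (2 ^ n))) * moment_term n G p Obs (Xi n g z) (Xi n g z') L"
proof -
  let ?q = "complex_of_real (sqrt (real (2 ^ n)))"
  have q: "(2 :: complex) ^ n = ?q * ?q" by (simp flip: of_real_mult)
  have q_nonzero: "?q \<noteq> 0" by simp
  have sign: "complex_of_real ((-1) ^ pbeta n (Xi n g z) (Xi n g z') / (s1 n G p (Xi n g z) * s1 n G p (Xi n g z')))
      = Xi_sign n g z * Xi_sign n g z' * Xi_sign n g (symd z z')
        / (complex_of_real (s1 n G p (Xi n g z)) * complex_of_real (s1 n G p (Xi n g z')))"
    using power_pbeta_Xi[OF cg z z'] by simp
  have field_identity: "d * (e3 * h3 / d * (e1 / s * h1 / d) * (e2 / s' * h2 / d))
      = 1 / q * (e1 * e2 * e3 / (s * s') * (h1 / q) * (h2 / q) * (h3 / q))"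
    if "d = q * q" "q \<noteq> 0" for d q e1 e2 e3 h1 h2 h3 s s' :: complex
    using that by (simp add: field_simps)
  show ?thesis
    unfolding moment_term_def hs_npauli[OF Obs] hs_npauli[OF L] Xi_symd[OF cg z z'] sign
    by (rule field_identity[OF q q_nonzero])
qed

lemma outcome_moment_eq:
  assumes fin: "finite G" and cl: "\<forall>g\<in>G. is_clifford n g"
    and bij: "bij_betw (Sop n G p) (carrier_mat (2 ^ n) (2 ^ n)) (carrier_mat (2 ^ n) (2 ^ n))"
    and g: "g \<in> G" and Obs: "Obs \<in> carrier_mat (2 ^ n) (2 ^ n)"
    and L: "\<Lambda> g \<rho> \<in> carrier_mat (2 ^ n) (2 ^ n)"
  shows "(\<Sum>x<2 ^ n. outprob \<Lambda> \<rho> g x * (ohat n G p Obs g x)\<^sup>2)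
    = 1 / complex_of_real (sqrt (real (2 ^ n))) * (\<Sum>z\<in>bvecs n. \<Sum>z'\<in>bvecs n. moment_term n G p Obs (Xi n g z) (Xi n g z') (\<Lambda> g \<rho>))"
proof -
  have cg: "is_clifford n g" using cl g by auto
  define A where "A w = Xi_sign n g w * hs (pauli n (Xi n g w)) (\<Lambda> g \<rho>) / 2 ^ n" for w
  define B where "B z = Xi_sign n g z / s1 n G p (Xi n g z) * hs Obs (pauli n (Xi n g z)) / 2 ^ n" for z
  have "(\<Sum>x<2 ^ n. outprob \<Lambda> \<rho> g x * (ohat n G p Obs g x)\<^sup>2)
      = (\<Sum>x<2 ^ n. (\<Sum>w\<in>bvecs n. zchar n w x * A w) * (\<Sum>z\<in>bvecs n. zchar n z x * B z)\<^sup>2)"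
    by (intro sum.cong refl)
      (simp add: outprob_eq[of n g _ \<Lambda> \<rho>, OF cg _ L] ohat_eq[OF fin cl bij g _ Obs] A_def B_def mult_ac)
  also have "\<dots> = 2 ^ n * (\<Sum>z\<in>bvecs n. \<Sum>z'\<in>bvecs n. A (symd z z') * B z * B z')"
    by (rule sum_zchar_mult_square)
  also have "\<dots> = (\<Sum>z\<in>bvecs n. \<Sum>z'\<in>bvecs n.
      1 / complex_of_real (sqrt (real (2 ^ n))) * moment_term n G p Obs (Xi n g z) (Xi n g z') (\<Lambda> g \<rho>))"
    unfolding sum_distrib_left A_def B_def
    by (intro sum.cong refl Xi_summand_eq_moment_term[OF cg _ _ Obs L])
  finally show ?thesis by (simp add: sum_distrib_left)
qed


section \<open>Regrouping by the values of \<open>\<Xi>\<close>\<close>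

lemma sum_regroup_by_value_pairs:
  fixes H :: "'a \<Rightarrow> 'a \<Rightarrow> 'g \<Rightarrow> 'c :: comm_monoid_add"
  assumes "finite C" "finite G" "finite Z"
    and "\<And>g z z'. g \<in> G \<Longrightarrow> z \<in> Z \<Longrightarrow> z' \<in> Z \<Longrightarrow> (f g z, f g z') \<in> C"
  shows "(\<Sum>(a, b)\<in>C. \<Sum>z\<in>Z. \<Sum>z'\<in>Z. \<Sum>g\<in>{g\<in>G. f g z = a \<and> f g z' = b}. H a b g)
       = (\<Sum>g\<in>G. \<Sum>z\<in>Z. \<Sum>z'\<in>Z. H (f g z) (f g z') g)"
proof -
  have "(\<Sum>(a, b)\<in>C. \<Sum>z\<in>Z. \<Sum>z'\<in>Z. \<Sum>g\<in>{g\<in>G. f g z = a \<and> f g z' = b}. H a b g)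
      = (\<Sum>c\<in>C. \<Sum>z\<in>Z. \<Sum>z'\<in>Z. \<Sum>g\<in>{g\<in>G. (f g z, f g z') = c}. H (f g z) (f g z') g)"
    by (intro sum.cong refl) (auto intro!: sum.cong)
  also have "\<dots> = (\<Sum>z\<in>Z. \<Sum>z'\<in>Z. \<Sum>c\<in>C. \<Sum>g\<in>{g\<in>G. (f g z, f g z') = c}. H (f g z) (f g z') g)"
    by (subst sum.swap) (intro sum.cong refl sum.swap)
  also have "\<dots> = (\<Sum>z\<in>Z. \<Sum>z'\<in>Z. \<Sum>g\<in>G. H (f g z) (f g z') g)"
    by (intro sum.cong refl sum.group) (use assms in auto)
  also have "\<dots> = (\<Sum>g\<in>G. \<Sum>z\<in>Z. \<Sum>z'\<in>Z. H (f g z) (f g z') g)"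
    by (subst sum.swap) (intro sum.cong refl sum.swap)
  finally show ?thesis .
qed

lemma hs_Lbar:
  assumes M: "M \<in> carrier_mat (2 ^ n) (2 ^ n)" and L: "\<forall>g\<in>G. \<Lambda> g A \<in> carrier_mat (2 ^ n) (2 ^ n)"
  shows "hs M (Lbar n G p \<Lambda> a b A) = complex_of_real (inverse (r2 n G p a b)) *
    (\<Sum>z\<in>bvecs n. \<Sum>z'\<in>bvecs n. \<Sum>g\<in>{g\<in>G. Xi n g z = a \<and> Xi n g z' = b}.
       complex_of_real (p g) * hs M (\<Lambda> g A))"
proof -
  have "Lbar n G p \<Lambda> a b A = complex_of_real (inverse (r2 n G p a b)) \<cdot>\<^sub>m
      lincomb_mat (2 ^ n) (bvecs n) (\<lambda>_. 1) (\<lambda>z. lincomb_mat (2 ^ n) (bvecs n) (\<lambda>_. 1)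
        (\<lambda>z'. lincomb_mat (2 ^ n) {g\<in>G. Xi n g z = a \<and> Xi n g z' = b} (\<lambda>g. complex_of_real (p g)) (\<lambda>g. \<Lambda> g A)))"
    by (rule eq_matI) (auto simp: Lbar_def)
  then show ?thesis using L by (simp add: hs_smult_right[OF M] hs_lincomb_mat(1)[OF M])
qed

lemma r2_eq_0_imp_p_eq_0:
  assumes fin: "finite G" and p: "\<forall>g\<in>G. p g \<ge> 0" and r2: "r2 n G p a b = 0"
    and z: "z \<in> bvecs n" and z': "z' \<in> bvecs n" and "g \<in> G" "Xi n g z = a" "Xi n g z' = b"
  shows "p g = 0"
proof -
  let ?F = "\<lambda>z z'. {g\<in>G. Xi n g z = a \<and> Xi n g z' = b}"
  have "p g \<le> (\<Sum>g\<in>?F z z'. p g)"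
    by (rule member_le_sum) (use assms in auto)
  also have "\<dots> \<le> (\<Sum>z'\<in>bvecs n. \<Sum>g\<in>?F z z'. p g)"
    by (rule member_le_sum[OF z']) (use p in \<open>auto intro: sum_nonneg\<close>)
  also have "\<dots> \<le> r2 n G p a b"
    unfolding r2_def by (rule member_le_sum[OF z]) (use p in \<open>auto intro!: sum_nonneg\<close>)
  finally show "p g = 0" using p r2 \<open>g \<in> G\<close> by force
qed

lemma s2_inverse_r2_mult_fiber_sum:
  fixes n :: nat and a b :: "nat set \<times> nat set" and f :: "complex mat \<Rightarrow> complex"
  assumes fin: "finite G" and p: "\<forall>g\<in>G. p g \<ge> 0"
  defines "X \<equiv> \<Sum>z\<in>bvecs n. \<Sum>z'\<in>bvecs n. \<Sum>g\<in>{g\<in>G. Xi n g z = a \<and> Xi n g z' = b}.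
    complex_of_real (p g) * f g"
  shows "complex_of_real (s2 n G p a b / (s1 n G p a * s1 n G p b)) * complex_of_real (inverse (r2 n G p a b)) * X
    = complex_of_real ((-1) ^ pbeta n a b / (s1 n G p a * s1 n G p b)) * X"
proof (cases "r2 n G p a b = 0")
  case True
  then have "X = 0"
    unfolding X_def using r2_eq_0_imp_p_eq_0[OF fin p True] by (intro sum.neutral ballI) simp
  then show ?thesis by simp
next
  case False
  then have "s2 n G p a b / (s1 n G p a * s1 n G p b) * inverse (r2 n G p a b)
      = (-1) ^ pbeta n a b / (s1 n G p a * s1 n G p b)"
    by (simp add: s2_def field_simps)
  then have "complex_of_real (s2 n G p a b / (s1 n G p a * s1 n G p b)) * complex_of_real (inverse (r2 n G p a b))
      = complex_of_real ((-1) ^ pbeta n a b / (s1 n G p a * s1 n G p b))"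
    unfolding of_real_mult[symmetric] by (rule arg_cong)
  then show ?thesis by (simp only:)
qed

lemma Lbar_moment_term:
  assumes fin: "finite G" and p: "\<forall>g\<in>G. p g \<ge> 0"
    and Obs: "Obs \<in> carrier_mat (2 ^ n) (2 ^ n)" and L: "\<forall>g\<in>G. \<Lambda> g \<rho> \<in> carrier_mat (2 ^ n) (2 ^ n)"
  shows "complex_of_real (s2 n G p a b / (s1 n G p a * s1 n G p b)) *
       hs Obs (npauli n a) * hs Obs (npauli n b) * hs (npauli n (padd a b)) (Lbar n G p \<Lambda> a b \<rho>)
    = (\<Sum>z\<in>bvecs n. \<Sum>z'\<in>bvecs n. \<Sum>g\<in>{g\<in>G. Xi n g z = a \<and> Xi n g z' = b}.
        complex_of_real (p g) * moment_term n G p Obs a b (\<Lambda> g \<rho>))"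
proof -
  let ?X = "\<Sum>z\<in>bvecs n. \<Sum>z'\<in>bvecs n. \<Sum>g\<in>{g\<in>G. Xi n g z = a \<and> Xi n g z' = b}.
    complex_of_real (p g) * hs (npauli n (padd a b)) (\<Lambda> g \<rho>)"
  have "hs (npauli n (padd a b)) (Lbar n G p \<Lambda> a b \<rho>) = complex_of_real (inverse (r2 n G p a b)) * ?X"
    using L by (intro hs_Lbar) (simp_all add: npauli_def)
  then have "complex_of_real (s2 n G p a b / (s1 n G p a * s1 n G p b)) *
       hs Obs (npauli n a) * hs Obs (npauli n b) * hs (npauli n (padd a b)) (Lbar n G p \<Lambda> a b \<rho>)
      = hs Obs (npauli n a) * hs Obs (npauli n b) *
        (complex_of_real (s2 n G p a b / (s1 n G p a * s1 n G p b)) * complex_of_real (inverse (r2 n G p a b)) * ?X)"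
    by (simp only: mult_ac)
  also have "\<dots> = hs Obs (npauli n a) * hs Obs (npauli n b) *
      (complex_of_real ((-1) ^ pbeta n a b / (s1 n G p a * s1 n G p b)) * ?X)"
    unfolding s2_inverse_r2_mult_fiber_sum[OF fin p] ..
  also have "\<dots> = (\<Sum>z\<in>bvecs n. \<Sum>z'\<in>bvecs n. \<Sum>g\<in>{g\<in>G. Xi n g z = a \<and> Xi n g z' = b}.
        complex_of_real (p g) * moment_term n G p Obs a b (\<Lambda> g \<rho>))"
    by (simp add: moment_term_def sum_distrib_left mult_ac)
  finally show ?thesis .
qed

theorem lemma5:
  fixes n :: nat
    and G :: "complex mat set"
    and p :: "complex mat \<Rightarrow> real"
    and \<Lambda> :: "complex mat \<Rightarrow> complex mat \<Rightarrow> complex mat"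
    and Obs \<rho> :: "complex mat"
  assumes "finite G"
    and "\<forall>g\<in>G. is_clifford n g"
    and "\<forall>g\<in>G. p g \<ge> 0"
    and "(\<Sum>g\<in>G. p g) = 1"
    and "bij_betw (Sop n G p) (carrier_mat (2^n) (2^n)) (carrier_mat (2^n) (2^n))"
    and "\<forall>g\<in>G. is_channel (2^n) (\<Lambda> g)"
    and "is_observable (2^n) Obs"
    and "is_state (2^n) \<rho>"
  shows "second_moment n G p \<Lambda> Obs \<rho> =
    (1 / complex_of_real (sqrt (real (2^n)))) *
    (\<Sum>(a, b) \<in> {(a, b). a \<in> pidx n \<and> b \<in> pidx n \<and> pcommute n a b}.
       complex_of_real (s2 n G p a b / (s1 n G p a * s1 n G p b)) *
       hs Obs (npauli n a) * hs Obs (npauli n b) *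
       hs (npauli n (padd a b)) (Lbar n G p \<Lambda> a b \<rho>))"
proof -
  have Obs: "Obs \<in> carrier_mat (2 ^ n) (2 ^ n)"
    using assms(7) by (simp add: is_observable_def)
  have L: "\<forall>g\<in>G. \<Lambda> g \<rho> \<in> carrier_mat (2 ^ n) (2 ^ n)"
    using assms(6,8) by (simp add: is_channel_def is_linear_superop_def is_state_def is_psd_def)
  let ?C = "{(a, b). a \<in> pidx n \<and> b \<in> pidx n \<and> pcommute n a b}"
  have "second_moment n G p \<Lambda> Obs \<rho> = (\<Sum>g\<in>G. complex_of_real (p g) * (1 / complex_of_real (sqrt (real (2 ^ n))) *
      (\<Sum>z\<in>bvecs n. \<Sum>z'\<in>bvecs n. moment_term n G p Obs (Xi n g z) (Xi n g z') (\<Lambda> g \<rho>))))"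
    unfolding second_moment_def using L by (simp add: outcome_moment_eq[OF assms(1,2,5) _ Obs])
  also have "\<dots> = 1 / complex_of_real (sqrt (real (2 ^ n))) * (\<Sum>g\<in>G. \<Sum>z\<in>bvecs n. \<Sum>z'\<in>bvecs n.
      complex_of_real (p g) * moment_term n G p Obs (Xi n g z) (Xi n g z') (\<Lambda> g \<rho>))"
    by (simp add: sum_distrib_left mult_ac)
  also have "(\<Sum>g\<in>G. \<Sum>z\<in>bvecs n. \<Sum>z'\<in>bvecs n.
      complex_of_real (p g) * moment_term n G p Obs (Xi n g z) (Xi n g z') (\<Lambda> g \<rho>))
    = (\<Sum>(a, b)\<in>?C. \<Sum>z\<in>bvecs n. \<Sum>z'\<in>bvecs n. \<Sum>g\<in>{g\<in>G. Xi n g z = a \<and> Xi n g z' = b}.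
      complex_of_real (p g) * moment_term n G p Obs a b (\<Lambda> g \<rho>))"
    by (rule sum_regroup_by_value_pairs[symmetric])
      (use assms(1,2) in \<open>auto simp: Xi_pidx pcommute_Xi intro: finite_subset[of _ "pidx n \<times> pidx n"]\<close>)
  also have "\<dots> = (\<Sum>(a, b)\<in>?C. complex_of_real (s2 n G p a b / (s1 n G p a * s1 n G p b)) *
      hs Obs (npauli n a) * hs Obs (npauli n b) * hs (npauli n (padd a b)) (Lbar n G p \<Lambda> a b \<rho>))"
    by (simp only: split_def Lbar_moment_term[where \<Lambda> = \<Lambda> and \<rho> = \<rho>, OF assms(1,3) Obs L])
  finally show ?thesis .
qed

end
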